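(* Let $\mu,\alpha,\gamma_0,\gamma_1>0$. A pair $(w,u)\in H^1(\Omega,\mathbb{R}^d)\times H^1(\Omega)$ solves $$\min_{(u,w)\in H^1(\Omega)\times H^1(\Omega,\mathbb{R}^d)}\ \tfrac12\|Tu-f\|^2_{L^2}+\int_\Omega\alpha_1\varphi_{\gamma_1}(\nabla u-w)\,dx+\int_\Omega\alpha_0\varphi_{\gamma_0}(Ew)\,dx+\tfrac\mu2\|\nabla u\|^2_{L^2}+\tfrac\alpha2\|w\|^2_{H^1}$$ if and only if there exists $(p,q)\in L^2(\Omega,\mathcal{S}^{d\times d})\times L^2(\Omega,\mathbb{R}^d)$ such that (1) $Bu-\mu\Delta u+\nabla^*q-T^*f=0$ in $H^1(\Omega)^*$; (2) $\alpha w-\alpha\Delta w-q+E^*p=0$ in $H^1(\Omega,\mathbb{R}^d)^*$; (3) $\max(|\nabla u-w|,\gamma_1)\,q-\alpha_1(\nabla u-w)=0$ in $L^2(\Omega,\mathbb{R}^d)$; (4) $\max(|Ew|,\gamma_0)\,p-\alpha_0Ew=0$ in $L^2(\Omega,\mathcal{S}^{d\times d})$. (Such $(p,q)$ are the solutions of the corresponding predual problem.)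
   Context: Let $d\ge 2$, $\Omega\subset\mathbb{R}^d$ bounded open with Lipschitz boundary, $\mathcal{S}^{d\times d}$ the real symmetric matrices; $|\cdot|$ is the Euclidean norm on $\mathbb{R}^d$ and the Frobenius norm on matrices. $\alpha_0,\alpha_1\in C(\overline\Omega)$ with $\alpha_0,\alpha_1>\underline\alpha>0$. $T\in\mathcal{L}(L^{d/(d-1)}(\Omega),L^2(\Omega))$ with $B=T^*T$ invertible, $f\in L^2(\Omega)$; $Bu,T^*f\in H^1(\Omega)^*$ via $\langle Bu,v\rangle=\int Tu\,Tv$, $\langle T^*f,v\rangle=\int f\,Tv$. Huber function: for $\gamma>0$ and a vector/matrix field $v$, $\varphi_\gamma(v)(x)=|v(x)|-\frac\gamma2$ if $|v(x)|\ge\gamma$ and $\varphi_\gamma(v)(x)=\frac1{2\gamma}|v(x)|^2$ if $|v(x)|<\gamma$. $\nabla:H^1(\Omega)\to L^2(\Omega,\mathbb{R}^d)$, $E:H^1(\Omega,\mathbb{R}^d)\to L^2(\Omega,\mathcal{S}^{d\times d})$, $Ew=\frac12(\nabla w+\nabla w^\top)$, with adjoints $\nabla^*,E^*$. $-\mu\Delta u\in H^1(\Omega)^*$ is $v\mapsto\mu\int\nabla u\cdot\nabla v$; $\alpha w-\alpha\Delta w\in H^1(\Omega,\mathbb{R}^d)^*$ is $\omega\mapsto\alpha\int(w\cdot\omega+\nabla w:\nabla\omega)$; $\|w\|_{H^1}^2=\|w\|^2_{L^2}+\|\nabla w\|^2_{L^2}$. *)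

theory Defs
  imports "HOL-Analysis.Analysis"
begin

text \<open>Functions on \<Omega> \<subseteq> R^d are modelled as total functions on real^'n (d = CARD('n));
only their values on \<Omega> matter. All Lebesgue spaces are taken w.r.t. lebesgue_on \<Omega>.\<close>

definition Lp_fun :: "(real^'n) set \<Rightarrow> real \<Rightarrow> (real^'n \<Rightarrow> 'b::euclidean_space) \<Rightarrow> bool" where
  "Lp_fun \<Omega> p f \<longleftrightarrow> f \<in> borel_measurable (lebesgue_on \<Omega>) \<and>
     integrable (lebesgue_on \<Omega>) (\<lambda>x. norm (f x) powr p)"

definition L2_fun :: "(real^'n) set \<Rightarrow> (real^'n \<Rightarrow> 'b::euclidean_space) \<Rightarrow> bool" where
  "L2_fun \<Omega> f \<longleftrightarrow> f \<in> borel_measurable (lebesgue_on \<Omega>) \<and>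
     integrable (lebesgue_on \<Omega>) (\<lambda>x. (norm (f x))\<^sup>2)"

definition Lp_norm :: "(real^'n) set \<Rightarrow> real \<Rightarrow> (real^'n \<Rightarrow> 'b::euclidean_space) \<Rightarrow> real" where
  "Lp_norm \<Omega> p f = (integral\<^sup>L (lebesgue_on \<Omega>) (\<lambda>x. norm (f x) powr p)) powr (1/p)"

definition partial :: "(real^'n \<Rightarrow> real) \<Rightarrow> 'n \<Rightarrow> real^'n \<Rightarrow> real" where
  "partial \<phi> i x = frechet_derivative \<phi> (at x) (axis i 1)"

coinductive C_inf :: "(real^'n \<Rightarrow> real) \<Rightarrow> bool" where
  "(\<forall>x. \<phi> differentiable (at x)) \<Longrightarrow> (\<forall>i. C_inf (partial \<phi> i)) \<Longrightarrow> C_inf \<phi>"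

definition test_fun :: "(real^'n) set \<Rightarrow> (real^'n \<Rightarrow> real) \<Rightarrow> bool" where
  "test_fun \<Omega> \<phi> \<longleftrightarrow> C_inf \<phi> \<and> compact (closure {x. \<phi> x \<noteq> 0}) \<and> closure {x. \<phi> x \<noteq> 0} \<subseteq> \<Omega>"

definition has_weak_grad :: "(real^'n) set \<Rightarrow> (real^'n \<Rightarrow> real) \<Rightarrow> (real^'n \<Rightarrow> real^'n) \<Rightarrow> bool" where
  "has_weak_grad \<Omega> u G \<longleftrightarrow> (\<forall>\<phi>. test_fun \<Omega> \<phi> \<longrightarrow> (\<forall>i.
      integral\<^sup>L (lebesgue_on \<Omega>) (\<lambda>x. u x * partial \<phi> i x)
      = - integral\<^sup>L (lebesgue_on \<Omega>) (\<lambda>x. G x $ i * \<phi> x)))"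

definition H1 :: "(real^'n) set \<Rightarrow> (real^'n \<Rightarrow> real) \<Rightarrow> bool" where
  "H1 \<Omega> u \<longleftrightarrow> L2_fun \<Omega> u \<and> (\<exists>G. L2_fun \<Omega> G \<and> has_weak_grad \<Omega> u G)"

text \<open>The weak gradient (a representative; unique a.e.).\<close>
definition wgrad :: "(real^'n) set \<Rightarrow> (real^'n \<Rightarrow> real) \<Rightarrow> real^'n \<Rightarrow> real^'n" where
  "wgrad \<Omega> u = (SOME G. L2_fun \<Omega> G \<and> has_weak_grad \<Omega> u G)"

definition H1v :: "(real^'n) set \<Rightarrow> (real^'n \<Rightarrow> real^'n) \<Rightarrow> bool" where
  "H1v \<Omega> w \<longleftrightarrow> (\<forall>i. H1 \<Omega> (\<lambda>x. w x $ i))"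

definition wjac :: "(real^'n) set \<Rightarrow> (real^'n \<Rightarrow> real^'n) \<Rightarrow> real^'n \<Rightarrow> real^'n^'n" where
  "wjac \<Omega> w x = (\<chi> i. wgrad \<Omega> (\<lambda>y. w y $ i) x)"

definition symgrad :: "(real^'n) set \<Rightarrow> (real^'n \<Rightarrow> real^'n) \<Rightarrow> real^'n \<Rightarrow> real^'n^'n" where
  "symgrad \<Omega> w x = (1/2) *\<^sub>R (wjac \<Omega> w x + transpose (wjac \<Omega> w x))"

definition huber :: "real \<Rightarrow> real \<Rightarrow> real" where
  "huber \<gamma> r = (if r \<ge> \<gamma> then r - \<gamma>/2 else r\<^sup>2 / (2*\<gamma>))"

text \<open>Lipschitz boundary: locally \<Omega> is the region below the graph of a Lipschitz function.\<close>
definition lipschitz_boundary :: "(real^'n) set \<Rightarrow> bool" where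
  "lipschitz_boundary \<Omega> \<longleftrightarrow> (\<forall>x\<in>frontier \<Omega>. \<exists>r>0. \<exists>e h C. norm e = 1 \<and>
      C-lipschitz_on UNIV h \<and> (\<forall>y t. h (y + t *\<^sub>R e) = h y) \<and>
      \<Omega> \<inter> ball x r = {y \<in> ball x r. y \<bullet> e < h y})"

definition Jfun :: "(real^'n) set \<Rightarrow> ((real^'n \<Rightarrow> real) \<Rightarrow> (real^'n \<Rightarrow> real)) \<Rightarrow> (real^'n \<Rightarrow> real)
   \<Rightarrow> (real^'n \<Rightarrow> real) \<Rightarrow> (real^'n \<Rightarrow> real) \<Rightarrow> real \<Rightarrow> real \<Rightarrow> real \<Rightarrow> real
   \<Rightarrow> (real^'n \<Rightarrow> real) \<Rightarrow> (real^'n \<Rightarrow> real^'n) \<Rightarrow> real" where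
  "Jfun \<Omega> T f \<alpha>0 \<alpha>1 \<gamma>0 \<gamma>1 \<mu> \<alpha> u w =
     (1/2) * integral\<^sup>L (lebesgue_on \<Omega>) (\<lambda>x. (T u x - f x)\<^sup>2)
     + integral\<^sup>L (lebesgue_on \<Omega>) (\<lambda>x. \<alpha>1 x * huber \<gamma>1 (norm (wgrad \<Omega> u x - w x)))
     + integral\<^sup>L (lebesgue_on \<Omega>) (\<lambda>x. \<alpha>0 x * huber \<gamma>0 (norm (symgrad \<Omega> w x)))
     + (\<mu>/2) * integral\<^sup>L (lebesgue_on \<Omega>) (\<lambda>x. (norm (wgrad \<Omega> u x))\<^sup>2)
     + (\<alpha>/2) * (integral\<^sup>L (lebesgue_on \<Omega>) (\<lambda>x. (norm (w x))\<^sup>2)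
                + integral\<^sup>L (lebesgue_on \<Omega>) (\<lambda>x. (norm (wjac \<Omega> w x))\<^sup>2))"

end

theory Submission
  imports Defs "HOL-Computational_Algebra.Polynomial"
begin

text \<open>The Huber function \<open>huber \<gamma> (norm a)\<close> is convex and differentiable with gradient
\<open>a / max (norm a) \<gamma>\<close>, and this gradient is \<open>1/\<gamma>\<close>-Lipschitz. Hence, writing \<open>z = (u, w)\<close> and
\<open>\<delta>J z h\<close> for the first variation of the objective, one has pointwise, and after integration,
\<open>J z + t \<delta>J z h \<le> J (z + t h) \<le> J z + t \<delta>J z h + t\<^sup>2 K h\<close>.
At a minimiser the upper bound for all real \<open>t\<close> forces \<open>\<delta>J z h = 0\<close>; with \<open>q\<close> and \<open>p\<close> defined by
(3) and (4) this is exactly (1) and (2). Conversely (3) and (4) determine \<open>q\<close> and \<open>p\<close>, (1) and (2)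
then say \<open>\<delta>J z = 0\<close>, and the lower bound with \<open>t = 1\<close> gives minimality.
The one analytic ingredient is that weak gradients are unique almost everywhere (the fundamental
lemma of the calculus of variations, proved with smooth bump functions), so that \<open>wgrad\<close> is
linear up to null sets.\<close>

section \<open>Smooth bump functions\<close>

coinductive C_inf_real :: "(real \<Rightarrow> real) \<Rightarrow> bool" where
  "(\<forall>x. h differentiable (at x)) \<Longrightarrow> C_inf_real (deriv h) \<Longrightarrow> C_inf_real h"

definition exp_recip_poly :: "real poly \<Rightarrow> real \<Rightarrow> real" where
  "exp_recip_poly P t = (if t > 0 then poly P (1/t) * exp (-(1/t)) else 0)"

text \<open>With \<open>s = 1/t\<close>, the derivative of \<open>P(s) e\<^sup>-\<^sup>s\<close> is \<open>s\<^sup>2 (P(s) - P'(s)) e\<^sup>-\<^sup>s\<close>.\<close>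
definition exp_recip_poly_deriv :: "real poly \<Rightarrow> real poly" where
  "exp_recip_poly_deriv P = pCons 0 (pCons 0 (P - pderiv P))"

lemma poly_times_exp_neg_tendsto_0: "((\<lambda>y. poly R y * exp (- y)) \<longlongrightarrow> (0::real)) at_top"
proof -
  have "poly R y * exp (- y) = (\<Sum>i\<le>degree R. coeff R i * (y ^ i / exp y))" for y
    by (simp add: poly_altdef sum_divide_distrib exp_minus field_simps)
  then show ?thesis
    by (simp only:) (intro tendsto_null_sum tendsto_mult_right_zero tendsto_power_div_exp_0)
qed

lemma has_real_derivative_exp_recip_poly:
  "(exp_recip_poly P has_real_derivative exp_recip_poly (exp_recip_poly_deriv P) t) (at t)"
proof -
  consider "t > 0" | "t < 0" | "t = 0" by linarith
  then show ?thesis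
  proof cases
    case 1
    have "((\<lambda>s. poly P (1/s) * exp (-(1/s))) has_real_derivative
            exp_recip_poly (exp_recip_poly_deriv P) t) (at t)"
      using 1
      apply (auto intro!: derivative_eq_intros DERIV_chain2[OF poly_DERIV]
          simp: exp_recip_poly_def exp_recip_poly_deriv_def)
      apply (simp add: field_simps power2_eq_square)
      done
    then show ?thesis
      by (rule has_field_derivative_transform_within_open[of _ _ _ "{0<..}"])
        (use 1 in \<open>auto simp: exp_recip_poly_def\<close>)
  next
    case 2
    have "((\<lambda>s. 0) has_real_derivative exp_recip_poly (exp_recip_poly_deriv P) t) (at t)"
      using 2 by (auto simp: exp_recip_poly_def)
    then show ?thesis
      by (rule has_field_derivative_transform_within_open[of _ _ _ "{..<0}"])
        (use 2 in \<open>auto simp: exp_recip_poly_def\<close>)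
  next
    case 3
    have "((\<lambda>s. (exp_recip_poly P s - exp_recip_poly P 0) / (s - 0)) \<longlongrightarrow> 0) (at 0)"
    proof (rule filterlim_split_at_real)
      show "((\<lambda>s. (exp_recip_poly P s - exp_recip_poly P 0) / (s - 0)) \<longlongrightarrow> 0) (at_left 0)"
        by (rule tendsto_eventually)
          (auto simp: exp_recip_poly_def eventually_at_left_field intro!: exI[of _ "-1"])
    next
      have "((\<lambda>s. poly (pCons 0 P) (inverse s) * exp (- inverse s)) \<longlongrightarrow> (0::real)) (at_right 0)"
        by (rule filterlim_compose[OF poly_times_exp_neg_tendsto_0 filterlim_inverse_at_top_right])
      then show "((\<lambda>s. (exp_recip_poly P s - exp_recip_poly P 0) / (s - 0)) \<longlongrightarrow> 0) (at_right 0)"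
        apply (rule Lim_transform_eventually)
        apply (auto simp: exp_recip_poly_def eventually_at_right_field intro!: exI[of _ 1])
        apply (simp add: field_simps)
        done
    qed
    then show ?thesis using 3
      by (simp add: has_field_derivative_iff exp_recip_poly_def exp_recip_poly_deriv_def)
  qed
qed

lemma C_inf_real_exp_recip_poly: "C_inf_real (exp_recip_poly P)"
proof -
  have "h \<in> range exp_recip_poly \<Longrightarrow> C_inf_real h" for h
  proof (coinduction arbitrary: h rule: C_inf_real.coinduct)
    case (C_inf_real h)
    then obtain P where h: "h = exp_recip_poly P" by auto
    have "deriv h = exp_recip_poly (exp_recip_poly_deriv P)"
      unfolding h by (rule ext) (rule DERIV_imp_deriv[OF has_real_derivative_exp_recip_poly])
    moreover have "\<forall>x. h differentiable (at x)"
      unfolding h using has_real_derivative_exp_recip_poly real_differentiable_def by blast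
    ultimately show ?case by auto
  qed
  then show ?thesis by auto
qed

lemma C_inf_real_affine: "C_inf_real h \<Longrightarrow> C_inf_real (\<lambda>t. c * h (a * t + b))"
proof -
  have "g \<in> {(\<lambda>t. c * h (a * t + b)) | c a b h. C_inf_real h} \<Longrightarrow> C_inf_real g" for g
  proof (coinduction arbitrary: g rule: C_inf_real.coinduct)
    case (C_inf_real g)
    then obtain c a b h where g: "g = (\<lambda>t. c * h (a * t + b))" and h: "C_inf_real h" by auto
    from h have dh: "\<forall>x. h differentiable (at x)" and h': "C_inf_real (deriv h)"
      by (auto elim: C_inf_real.cases)
    have D: "(g has_real_derivative c * a * deriv h (a * x + b)) (at x)" for x
    proof -
      have "(h has_real_derivative deriv h (a * x + b)) (at (a * x + b))"
        using dh DERIV_deriv_iff_real_differentiable by blast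
      then show ?thesis unfolding g
        by (auto intro!: derivative_eq_intros DERIV_chain2[where f=h])
    qed
    have "deriv g = (\<lambda>x. (c * a) * deriv h (a * x + b))"
      by (rule ext) (use D DERIV_imp_deriv in auto)
    moreover have "\<forall>x. g differentiable (at x)" using D real_differentiable_def by blast
    ultimately show ?case using h' by blast
  qed
  then show "C_inf_real h \<Longrightarrow> C_inf_real (\<lambda>t. c * h (a * t + b))" by blast
qed

lemma C_inf_real_const: "C_inf_real (\<lambda>t. c)"
proof -
  have "g \<in> range (\<lambda>c t. c) \<Longrightarrow> C_inf_real g" for g
  proof (coinduction arbitrary: g rule: C_inf_real.coinduct)
    case (C_inf_real g)
    then obtain c where g: "g = (\<lambda>t. c)" by auto
    have "deriv g = (\<lambda>t. 0)" unfolding g by (rule ext) simp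
    then show ?case unfolding g by auto
  qed
  then show ?thesis by blast
qed

lemma partial_eq_derivative:
  assumes "(\<phi> has_derivative D) (at x)"
  shows "partial \<phi> i x = D (axis i 1)"
  using frechet_derivative_at[OF assms] by (simp add: partial_def)

lemma C_inf_comp_vec_nth:
  fixes i :: "'n::finite"
  assumes "C_inf_real h"
  shows "C_inf (\<lambda>x::real^'n. h (x $ i))"
proof -
  define X where "X = {(\<lambda>x::real^'n. h (x $ i)) | h i. C_inf_real h}"
  have XI: "C_inf_real h \<Longrightarrow> (\<lambda>x::real^'n. h (x $ i)) \<in> X" for h i
    unfolding X_def by blast
  have "g \<in> X \<Longrightarrow> C_inf g" for g
  proof (coinduction arbitrary: g rule: C_inf.coinduct)
    case (C_inf g)
    then obtain h i where g: "g = (\<lambda>x::real^'n. h (x $ i))" and h: "C_inf_real h"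
      unfolding X_def by blast
    from h have dh: "\<forall>x. h differentiable (at x)" and h': "C_inf_real (deriv h)"
      by (auto elim: C_inf_real.cases)
    have D: "(g has_derivative (\<lambda>y. deriv h (x $ i) * y $ i)) (at x)" for x
    proof -
      have "(h has_derivative (\<lambda>y. deriv h (x $ i) * y)) (at (x $ i))"
        using dh DERIV_deriv_iff_real_differentiable has_field_derivative_def by blast
      moreover have "((\<lambda>x::real^'n. x $ i) has_derivative (\<lambda>y. y $ i)) (at x)"
        using bounded_linear.has_derivative[OF bounded_linear_vec_nth has_derivative_ident] by blast
      ultimately show ?thesis
        unfolding g using has_derivative_compose[where f="\<lambda>x::real^'n. x $ i" and g=h] by fastforce
    qed
    have "partial g j = (\<lambda>x. (if j = i then deriv h else (\<lambda>t. 0)) (x $ i))" for j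
      by (rule ext) (auto simp: partial_eq_derivative[OF D] axis_def)
    moreover have "C_inf_real (if j = i then deriv h else (\<lambda>t. 0))" for j
      using h' C_inf_real_const by simp
    ultimately have "partial g j \<in> X" for j
      by (metis XI)
    moreover have "\<forall>x. g differentiable (at x)" using D differentiable_def by blast
    ultimately show ?case by blast
  qed
  then show ?thesis using XI[OF assms] by blast
qed

text \<open>Closure of \<open>C_inf\<close> under sums and products is a coinduction that needs this larger
invariant.\<close>
inductive C_inf_ring :: "(real^'n::finite \<Rightarrow> real) \<Rightarrow> bool" where
  base: "C_inf f \<Longrightarrow> C_inf_ring f"
| add: "C_inf_ring f \<Longrightarrow> C_inf_ring g \<Longrightarrow> C_inf_ring (\<lambda>x. f x + g x)"
| mult: "C_inf_ring f \<Longrightarrow> C_inf_ring g \<Longrightarrow> C_inf_ring (\<lambda>x. f x * g x)"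

lemma C_inf_ring_partial:
  "C_inf_ring f \<Longrightarrow> (\<forall>x. f differentiable (at x)) \<and> (\<forall>i. C_inf_ring (partial f i))"
proof (induction rule: C_inf_ring.induct)
  case (base f)
  then show ?case by (cases rule: C_inf.cases) (simp add: C_inf_ring.base)
next
  case (add f g)
  have "(\<lambda>x. f x + g x) differentiable (at x) \<and>
        partial (\<lambda>x. f x + g x) i x = partial f i x + partial g i x" for x i
  proof -
    obtain Df Dg where f: "(f has_derivative Df) (at x)" and g: "(g has_derivative Dg) (at x)"
      using add.IH unfolding differentiable_def by blast
    have fg: "((\<lambda>x. f x + g x) has_derivative (\<lambda>y. Df y + Dg y)) (at x)"
      by (rule has_derivative_add[OF f g])
    show ?thesis
      unfolding partial_eq_derivative[OF fg] partial_eq_derivative[OF f] partial_eq_derivative[OF g]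
      using fg differentiable_def by blast
  qed
  moreover have "C_inf_ring (\<lambda>x. partial f i x + partial g i x)" for i
    using add.IH by (blast intro: C_inf_ring.add)
  ultimately show ?case by (simp add: fun_eq_iff)
next
  case (mult f g)
  have "(\<lambda>x. f x * g x) differentiable (at x) \<and>
        partial (\<lambda>x. f x * g x) i x = f x * partial g i x + partial f i x * g x" for x i
  proof -
    obtain Df Dg where f: "(f has_derivative Df) (at x)" and g: "(g has_derivative Dg) (at x)"
      using mult.IH unfolding differentiable_def by blast
    have fg: "((\<lambda>x. f x * g x) has_derivative (\<lambda>y. f x * Dg y + Df y * g x)) (at x)"
      by (rule has_derivative_mult[OF f g])
    show ?thesis
      unfolding partial_eq_derivative[OF fg] partial_eq_derivative[OF f] partial_eq_derivative[OF g]
      using fg differentiable_def by blast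
  qed
  moreover have "C_inf_ring (\<lambda>x. f x * partial g i x + partial f i x * g x)" for i
    by (intro C_inf_ring.add C_inf_ring.mult) (use mult.IH mult.hyps in auto)
  ultimately show ?case by (simp add: fun_eq_iff)
qed

lemma C_inf_ring_imp_C_inf: "C_inf_ring f \<Longrightarrow> C_inf f"
proof (coinduction arbitrary: f rule: C_inf.coinduct)
  case (C_inf f)
  then show ?case using C_inf_ring_partial by blast
qed

lemma C_inf_ring_prod:
  "finite S \<Longrightarrow> (\<And>i. i \<in> S \<Longrightarrow> C_inf_ring (F i)) \<Longrightarrow> C_inf_ring (\<lambda>x::real^'n. \<Prod>i\<in>S. F i x)"
proof (induction rule: finite_induct)
  case empty
  have "C_inf (\<lambda>x::real^'n. (\<lambda>t. 1) (x $ undefined))"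
    by (rule C_inf_comp_vec_nth[OF C_inf_real_const])
  then show ?case by (auto intro: C_inf_ring.base)
next
  case (insert i S)
  have "C_inf_ring (\<lambda>x. F i x * (\<Prod>i\<in>S. F i x))"
    by (rule C_inf_ring.mult) (use insert.prems insert.IH in auto)
  then show ?case using insert.hyps by simp
qed

definition bump :: "real^'n::finite \<Rightarrow> real^'n \<Rightarrow> real \<Rightarrow> real^'n \<Rightarrow> real" where
  "bump a b k x =
     (\<Prod>i\<in>UNIV. exp_recip_poly 1 (k * x$i + (- k * a$i)) * exp_recip_poly 1 ((- k) * x$i + k * b$i))"

lemma exp_recip_poly_1: "exp_recip_poly 1 t = (if t > 0 then exp (- (1/t)) else 0)"
  by (simp add: exp_recip_poly_def)

lemma C_inf_bump:
  fixes a b :: "real^'n::finite"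
  shows "C_inf (bump a b k)"
proof -
  have "C_inf (\<lambda>x::real^'n. 1 * exp_recip_poly 1 (c * x$i + d))" for c d i
    by (rule C_inf_comp_vec_nth[OF C_inf_real_affine[OF C_inf_real_exp_recip_poly]])
  then have factor: "C_inf_ring (\<lambda>x::real^'n. exp_recip_poly 1 (c * x$i + d))" for c d i
    by (intro C_inf_ring.base) simp
  have "C_inf_ring (\<lambda>x::real^'n. exp_recip_poly 1 (k * x$i + (- k * a$i))
          * exp_recip_poly 1 ((- k) * x$i + k * b$i))" for i
    by (rule C_inf_ring.mult[OF factor factor])
  then have "C_inf_ring (bump a b k)"
    unfolding bump_def[abs_def] by (intro C_inf_ring_prod) auto
  then show ?thesis by (rule C_inf_ring_imp_C_inf)
qed

lemma bump_bounds: "0 \<le> bump a b k x" "bump a b k x \<le> 1"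
  unfolding bump_def
  by (auto intro!: prod_nonneg prod_le_1 mult_nonneg_nonneg mult_le_one simp: exp_recip_poly_1)

lemma bump_nonzero_imp_mem_box:
  assumes "k > 0" "bump a b k x \<noteq> 0"
  shows "x \<in> box a b"
proof -
  have "k * x$i + (- k * a$i) > 0 \<and> (- k) * x$i + k * b$i > 0" for i
    using assms(2) unfolding bump_def by (auto simp: exp_recip_poly_1 split: if_splits)
  then have "a$i < x$i \<and> x$i < b$i" for i
    using assms(1)
    by (metis add.commute diff_gt_0_iff_gt minus_mult_left mult_less_cancel_left_pos
        right_diff_distrib uminus_add_conv_diff)
  then show ?thesis by (simp add: mem_box_cart)
qed

lemma bump_tendsto_indicator:
  "(\<lambda>n. bump a b (real (Suc n)) x) \<longlonglongrightarrow> indicator (box a b) x"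
proof (cases "x \<in> box a b")
  case True
  then have ab: "a$i < x$i" "x$i < b$i" for i by (auto simp: mem_box_cart)
  have lim1: "(\<lambda>n. exp_recip_poly 1 (real (Suc n) * s)) \<longlonglongrightarrow> 1" if "s > 0" for s
  proof -
    have "(\<lambda>n. exp (- (inverse (real (Suc n)) * inverse s))) \<longlonglongrightarrow> exp (- (0 * inverse s))"
      by (intro tendsto_intros LIMSEQ_inverse_real_of_nat)
    moreover have "exp_recip_poly 1 (real (Suc n) * s) = exp (- (inverse (real (Suc n)) * inverse s))"
      for n using that by (simp add: exp_recip_poly_1 divide_inverse inverse_mult_distrib)
    ultimately show ?thesis by simp
  qed
  have "bump a b (real (Suc n)) x = (\<Prod>i\<in>UNIV. exp_recip_poly 1 (real (Suc n) * (x$i - a$i))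
          * exp_recip_poly 1 (real (Suc n) * (b$i - x$i)))" for n
    unfolding bump_def by (simp add: algebra_simps)
  moreover have "(\<lambda>n. \<Prod>i\<in>UNIV. exp_recip_poly 1 (real (Suc n) * (x$i - a$i))
          * exp_recip_poly 1 (real (Suc n) * (b$i - x$i))) \<longlonglongrightarrow> (\<Prod>i\<in>(UNIV::'a set). 1 * 1)"
    by (intro tendsto_prod tendsto_mult lim1) (use ab in auto)
  ultimately show ?thesis using True by simp
next
  case False
  then have "bump a b (real (Suc n)) x = 0" for n
    using bump_nonzero_imp_mem_box[of "real (Suc n)" a b x] by auto
  then show ?thesis using False by simp
qed

lemma test_fun_bump:
  assumes "k > 0" "cbox a b \<subseteq> \<Omega>"
  shows "test_fun \<Omega> (bump a b k)"
proof -
  have "{x. bump a b k x \<noteq> 0} \<subseteq> cbox a b"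
    using bump_nonzero_imp_mem_box[OF assms(1)] box_subset_cbox by blast
  then have c: "closure {x. bump a b k x \<noteq> 0} \<subseteq> cbox a b"
    by (rule closure_minimal[OF _ closed_cbox])
  then have "compact (closure {x. bump a b k x \<noteq> 0})"
    using c bounded_cbox bounded_subset closure_subset compact_closure by metis
  then show ?thesis using c assms C_inf_bump unfolding test_fun_def by blast
qed


section \<open>The fundamental lemma of the calculus of variations\<close>

lemma AE_eq_if_nn_integral_boxes_eq:
  fixes f g :: "real^'n::finite \<Rightarrow> ennreal"
  assumes [measurable]: "f \<in> borel_measurable lborel" "g \<in> borel_measurable lborel"
    and finite: "(\<integral>\<^sup>+ x. f x \<partial>lborel) \<noteq> \<infinity>"
    and boxes: "\<And>c d. (\<integral>\<^sup>+ x. f x * indicator (box c d) x \<partial>lborel)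
                      = (\<integral>\<^sup>+ x. g x * indicator (box c d) x \<partial>lborel)"
  shows "AE x in lborel. f x = g x"
proof -
  define E where "E = range (\<lambda>(a, b). box a b :: (real^'n) set)"
  define A where "A = (\<lambda>i::nat. box (- (real i *\<^sub>R (1::real^'n))) (real i *\<^sub>R 1))"
  have "density lborel f = density lborel g"
  proof (rule measure_eqI_generator_eq[where E=E and \<Omega>=UNIV and A=A])
    show "Int_stable E" unfolding E_def Int_stable_def by (auto simp: box_Int_box)
    show "E \<subseteq> Pow UNIV" by simp
    show "emeasure (density lborel f) X = emeasure (density lborel g) X" if "X \<in> E" for X
      using that boxes unfolding E_def by (auto simp: emeasure_density)
    show "sets (density lborel f) = sigma_sets UNIV E" "sets (density lborel g) = sigma_sets UNIV E"
      unfolding E_def by (simp_all add: borel_eq_box sets_measure_of)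
    show "range A \<subseteq> E" unfolding A_def E_def by auto
    show "(\<Union>i. A i) = UNIV"
    proof (rule set_eqI, rule iffI)
      fix x :: "real^'n"
      obtain i :: nat where i: "norm x < real i" using reals_Archimedean2 by blast
      have "- real i < x $ j \<and> x $ j < real i" for j
        using component_le_norm_cart[of x j] i abs_le_D1 abs_le_D2 by fastforce
      then have "x \<in> A i" unfolding A_def by (simp add: mem_box_cart)
      then show "x \<in> (\<Union>i. A i)" by blast
    qed auto
    show "emeasure (density lborel f) (A i) \<noteq> \<infinity>" for i
    proof -
      have "emeasure (density lborel f) (A i) \<le> emeasure (density lborel f) (space lborel)"
        by (rule emeasure_mono) auto
      also have "\<dots> = (\<integral>\<^sup>+ x. f x \<partial>lborel)" by (simp add: emeasure_density)
      finally show ?thesis using finite by (auto simp: top_unique)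
    qed
  qed
  then show ?thesis by (intro sigma_finite_measure.density_unique[OF sigma_finite_lborel]) auto
qed

lemma AE_zero_if_box_integrals_zero:
  fixes h :: "real^'n::finite \<Rightarrow> real"
  assumes h: "integrable lborel h"
    and boxes: "\<And>c d. (\<integral>x. indicator (box c d) x * h x \<partial>lborel) = 0"
  shows "AE x in lborel. h x = 0"
proof -
  have [measurable]: "h \<in> borel_measurable lborel" using h by auto
  have "AE x in lborel. ennreal (h x) = ennreal (- h x)"
  proof (rule AE_eq_if_nn_integral_boxes_eq)
    show "(\<integral>\<^sup>+ x. ennreal (h x) \<partial>lborel) \<noteq> \<infinity>" using h unfolding real_integrable_def by auto
    fix c d :: "real^'n"
    let ?hb = "\<lambda>x. indicator (box c d) x * h x"
    have ih: "integrable lborel ?hb" using integrable_mult_indicator[OF _ h] by simp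
    have "(\<integral>\<^sup>+ x. ennreal (h x) * indicator (box c d) x \<partial>lborel) = (\<integral>\<^sup>+ x. ennreal (?hb x) \<partial>lborel)"
      "(\<integral>\<^sup>+ x. ennreal (- h x) * indicator (box c d) x \<partial>lborel) = (\<integral>\<^sup>+ x. ennreal (- ?hb x) \<partial>lborel)"
      by (auto intro!: nn_integral_cong simp: indicator_def)
    moreover have
      "(\<integral>\<^sup>+ x. ennreal (?hb x) \<partial>lborel) = ennreal (enn2real (\<integral>\<^sup>+ x. ennreal (?hb x) \<partial>lborel))"
      "(\<integral>\<^sup>+ x. ennreal (- ?hb x) \<partial>lborel) = ennreal (enn2real (\<integral>\<^sup>+ x. ennreal (- ?hb x) \<partial>lborel))"
      using ih unfolding real_integrable_def by (simp_all add: less_top[symmetric])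
    moreover have
      "enn2real (\<integral>\<^sup>+ x. ennreal (?hb x) \<partial>lborel) = enn2real (\<integral>\<^sup>+ x. ennreal (- ?hb x) \<partial>lborel)"
      using real_lebesgue_integral_def[OF ih] boxes[of c d] by simp
    ultimately show "(\<integral>\<^sup>+ x. ennreal (h x) * indicator (box c d) x \<partial>lborel)
        = (\<integral>\<^sup>+ x. ennreal (- h x) * indicator (box c d) x \<partial>lborel)"
      by simp
  qed auto
  then show ?thesis
  proof eventually_elim
    case (elim x)
    show ?case
    proof (cases "h x \<ge> 0")
      case True
      then have "ennreal (- h x) = 0" by (simp add: ennreal_neg)
      with elim True show ?thesis by (simp add: ennreal_eq_0_iff)
    next
      case False
      then have "ennreal (h x) = 0" by (simp add: ennreal_neg)
      with elim False show ?thesis by (simp add: ennreal_eq_0_iff)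
    qed
  qed
qed

lemma C_inf_continuous: "C_inf f \<Longrightarrow> continuous_on UNIV f"
  by (erule C_inf.cases) (auto intro!: continuous_at_imp_continuous_on differentiable_imp_continuous_within)

lemma C_inf_partial: "C_inf f \<Longrightarrow> C_inf (partial f i)"
  by (erule C_inf.cases) auto

lemma bounded_if_compact_support:
  fixes f :: "real^'n::finite \<Rightarrow> real"
  assumes "continuous_on UNIV f" "compact K" "\<And>x. x \<notin> K \<Longrightarrow> f x = 0"
  shows "\<exists>B. \<forall>x. \<bar>f x\<bar> \<le> B"
proof -
  have "compact (f ` K)" using assms(1,2) compact_continuous_image continuous_on_subset by blast
  then have "bounded (f ` K)" by (rule compact_imp_bounded)
  then obtain B where B: "\<forall>y\<in>f ` K. norm y \<le> B" unfolding bounded_iff by blast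
  have "\<bar>f x\<bar> \<le> max B 0" for x
  proof (cases "x \<in> K")
    case True
    then have "norm (f x) \<le> B" using B by blast
    then show ?thesis by simp
  next
    case False
    then show ?thesis using assms(3)[of x] by simp
  qed
  then show ?thesis by blast
qed

lemma partial_eq_0_outside_support:
  fixes \<phi> :: "real^'n::finite \<Rightarrow> real"
  assumes "x \<notin> closure {x. \<phi> x \<noteq> 0}"
  shows "partial \<phi> i x = 0"
proof -
  let ?S = "- closure {x. \<phi> x \<noteq> 0}"
  have "open ?S" by auto
  have "((\<lambda>x. 0) has_derivative (\<lambda>h. 0)) (at x)" by simp
  then have "(\<phi> has_derivative (\<lambda>h. 0)) (at x)"
    by (rule has_derivative_transform_within_open[OF _ \<open>open ?S\<close>]) (use assms closure_subset[of "{x. \<phi> x \<noteq> 0}"] in auto)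
  then show ?thesis by (simp add: partial_eq_derivative)
qed

lemma test_fun_bounds:
  fixes \<phi> :: "real^'n::finite \<Rightarrow> real"
  assumes "test_fun \<Omega> \<phi>"
  shows "continuous_on UNIV \<phi>" "\<exists>B. \<forall>x. \<bar>\<phi> x\<bar> \<le> B"
    "continuous_on UNIV (partial \<phi> i)" "\<exists>B. \<forall>x. \<bar>partial \<phi> i x\<bar> \<le> B"
proof -
  have C: "C_inf \<phi>" and K: "compact (closure {x. \<phi> x \<noteq> 0})" using assms by (auto simp: test_fun_def)
  show c1: "continuous_on UNIV \<phi>" by (rule C_inf_continuous[OF C])
  show c2: "continuous_on UNIV (partial \<phi> i)" by (rule C_inf_continuous[OF C_inf_partial[OF C]])
  show "\<exists>B. \<forall>x. \<bar>\<phi> x\<bar> \<le> B"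
    by (rule bounded_if_compact_support[OF c1 K]) (use closure_subset[of "{x. \<phi> x \<noteq> 0}"] in auto)
  show "\<exists>B. \<forall>x. \<bar>partial \<phi> i x\<bar> \<le> B"
    by (rule bounded_if_compact_support[OF c2 K]) (rule partial_eq_0_outside_support)
qed

lemma sets_lebesgue_open: "open (\<Omega>::(real^'n::finite) set) \<Longrightarrow> \<Omega> \<in> sets lebesgue"
  by (simp add: borel_open sets_completionI_sets)

lemma continuous_imp_measurable_on_open:
  fixes f :: "real^'n::finite \<Rightarrow> real"
  shows "open \<Omega> \<Longrightarrow> continuous_on UNIV f \<Longrightarrow> f \<in> borel_measurable (lebesgue_on \<Omega>)"
  using continuous_imp_measurable_on_sets_lebesgue continuous_on_subset sets_lebesgue_open
  by (metis subset_UNIV)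

lemma box_integral_zero_if_test_integrals_zero:
  fixes g :: "real^'n::finite \<Rightarrow> real"
  assumes \<Omega>: "open \<Omega>" and g: "integrable (lebesgue_on \<Omega>) g"
    and T: "\<forall>\<phi>. test_fun \<Omega> \<phi> \<longrightarrow> (\<integral>x. g x * \<phi> x \<partial>lebesgue_on \<Omega>) = 0"
    and ab: "cbox a b \<subseteq> \<Omega>"
  shows "(\<integral>x. g x * indicator (box a b) x \<partial>lebesgue_on \<Omega>) = 0"
proof -
  let ?M = "lebesgue_on \<Omega>"
  have tf: "test_fun \<Omega> (bump a b (real (Suc n)))" for n by (rule test_fun_bump) (use ab in auto)
  have bm: "bump a b (real (Suc n)) \<in> borel_measurable ?M" for n
    using continuous_imp_measurable_on_open[OF \<Omega> test_fun_bounds(1)[OF tf]] .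
  have gm: "g \<in> borel_measurable ?M" by (rule borel_measurable_integrable[OF g])
  have lim: "(\<lambda>n. \<integral>x. g x * bump a b (real (Suc n)) x \<partial>?M) \<longlonglongrightarrow> (\<integral>x. g x * indicator (box a b) x \<partial>?M)"
  proof (rule integral_dominated_convergence[where w="\<lambda>x. norm (g x)"])
    show "(\<lambda>x. g x * indicator (box a b) x) \<in> borel_measurable ?M"
    proof -
      have "(indicator (box a b) :: real^'n \<Rightarrow> real) \<in> borel_measurable ?M"
        by (rule measurable_restrict_space1, rule borel_measurable_indicator) (simp add: sets_lebesgue_open)
      then show ?thesis using gm by (rule borel_measurable_times[rotated])
    qed
    show "(\<lambda>x. g x * bump a b (real (Suc n)) x) \<in> borel_measurable ?M" for n
      by (rule borel_measurable_times[OF gm bm])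
    show "integrable ?M (\<lambda>x. norm (g x))" by (rule integrable_norm[OF g])
    show "AE x in ?M. (\<lambda>n. g x * bump a b (real (Suc n)) x) \<longlonglongrightarrow> g x * indicator (box a b) x"
      by (intro AE_I2 tendsto_mult tendsto_const bump_tendsto_indicator)
    show "AE x in ?M. norm (g x * bump a b (real (Suc n)) x) \<le> norm (g x)" for n
    proof (intro AE_I2)
      fix x
      have "\<bar>g x\<bar> * bump a b (real (Suc n)) x \<le> \<bar>g x\<bar>"
        by (rule mult_left_le) (simp_all add: bump_bounds)
      then show "norm (g x * bump a b (real (Suc n)) x) \<le> norm (g x)"
        using bump_bounds(1)[of a b "real (Suc n)" x] by (simp add: abs_mult)
    qed
  qed
  moreover have "(\<integral>x. g x * bump a b (real (Suc n)) x \<partial>?M) = 0" for n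
    using spec[OF T, of "bump a b (real (Suc n))"] tf by simp
  ultimately have "(\<lambda>n. 0::real) \<longlonglongrightarrow> (\<integral>x. g x * indicator (box a b) x \<partial>?M)"
    by simp
  then show ?thesis using LIMSEQ_unique[OF _ tendsto_const] by metis
qed

lemma rational_box_neighbourhood:
  fixes \<Omega> :: "(real^'n::finite) set"
  assumes "open \<Omega>" "x \<in> \<Omega>"
  shows "\<exists>a b. (\<forall>i. a$i \<in> \<rat>) \<and> (\<forall>i. b$i \<in> \<rat>) \<and> cbox a b \<subseteq> \<Omega> \<and> x \<in> box a b"
proof -
  obtain e where e: "e > 0" "ball x e \<subseteq> \<Omega>" using assms openE by blast
  obtain a b :: "real^'n" where ab: "\<forall>i\<in>Basis. a \<bullet> i \<in> \<rat> \<and> b \<bullet> i \<in> \<rat>" "x \<in> box a b" "box a b \<subseteq> ball x (e/2)"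
    using rational_boxes[of "e/2" x] e by auto
  have "box a b \<noteq> {}" using ab by auto
  then have "cbox a b = closure (box a b)" by simp
  also have "\<dots> \<subseteq> closure (ball x (e/2))" using ab by (intro closure_mono) auto
  also have "\<dots> \<subseteq> cball x (e/2)" by (simp add: closure_minimal)
  also have "\<dots> \<subseteq> ball x e" using e by (auto simp: subset_eq)
  finally have c: "cbox a b \<subseteq> \<Omega>" using e by auto
  have "a$i \<in> \<rat> \<and> b$i \<in> \<rat>" for i
    using ab(1) cart_eq_inner_axis[of a i] cart_eq_inner_axis[of b i]
    by (metis axis_in_Basis_iff Basis_real_def insertI1)
  then show ?thesis using c ab by blast
qed

lemma AE_on_open_if_AE_on_boxes:
  fixes \<Omega> :: "(real^'n::finite) set"
  assumes \<Omega>: "open \<Omega>" and boxes: "\<And>a b. cbox a b \<subseteq> \<Omega> \<Longrightarrow> AE x in lborel. x \<in> box a b \<longrightarrow> P x"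
  shows "AE x in lborel. x \<in> \<Omega> \<longrightarrow> P x"
proof -
  define Q where "Q = {(a, b). (\<forall>i. a$i \<in> \<rat>) \<and> (\<forall>i. b$i \<in> \<rat>) \<and> cbox a b \<subseteq> (\<Omega>::(real^'n) set)}"
  have "countable Q"
  proof -
    have "countable ({V::real^'n. \<forall>i. V $ i \<in> \<rat>} \<times> {V::real^'n. \<forall>i. V $ i \<in> \<rat>})"
      using countable_vector[of "\<lambda>i. \<rat>"] countable_rat by blast
    moreover have "Q \<subseteq> {V::real^'n. \<forall>i. V $ i \<in> \<rat>} \<times> {V::real^'n. \<forall>i. V $ i \<in> \<rat>}"
      unfolding Q_def by auto
    ultimately show ?thesis by (rule countable_subset[rotated])
  qed
  then have "AE x in lborel. \<forall>p\<in>Q. x \<in> box (fst p) (snd p) \<longrightarrow> P x"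
    by (subst AE_ball_countable) (auto simp: Q_def intro!: boxes)
  then show ?thesis
  proof eventually_elim
    case (elim x)
    show ?case
    proof
      assume "x \<in> \<Omega>"
      then obtain a b where "(a, b) \<in> Q" "x \<in> box a b"
        using rational_box_neighbourhood[OF \<Omega>] unfolding Q_def by blast
      then show "P x" using elim by (metis fst_conv snd_conv)
    qed
  qed
qed

lemma borel_representative_on:
  fixes g :: "real^'n::finite \<Rightarrow> real"
  assumes \<Omega>l: "\<Omega> \<in> sets lebesgue" and g: "integrable (lebesgue_on \<Omega>) g"
  obtains g' where "integrable lborel g'" "AE x in lborel. indicator \<Omega> x * g x = g' x"
    "\<And>S. S \<in> sets borel \<Longrightarrow>
      (\<integral>x. indicator S x * g' x \<partial>lborel) = (\<integral>x. g x * indicator S x \<partial>lebesgue_on \<Omega>)"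
proof -
  define G where "G = (\<lambda>x. indicator \<Omega> x * g x)"
  have GI: "integrable lebesgue G"
    using integrable_restrict_space[of \<Omega> lebesgue g] \<Omega>l g unfolding G_def by simp
  have Gint: "(\<integral>x. G x * indicator S x \<partial>lebesgue) = (\<integral>x. g x * indicator S x \<partial>lebesgue_on \<Omega>)" for S
    using integral_restrict_space[of \<Omega> lebesgue "\<lambda>x. g x * indicator S x"] \<Omega>l
    unfolding G_def by (simp add: ac_simps)
  have Gm: "G \<in> borel_measurable (completion lborel)" using GI by auto
  obtain g' where g'm: "g' \<in> borel_measurable lborel" and Gg': "AE x in lborel. G x = g' x"
    using completion_ex_borel_measurable_real[OF Gm] by blast
  have Gg'l: "AE x in lebesgue. G x = g' x" using Gg' by (rule AE_completion)
  have g'Il: "integrable lebesgue g'"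
    by (rule integrable_cong_AE_imp[OF GI _ Gg'l]) (rule measurable_completion[OF g'm])
  have g'I: "integrable lborel g'" using g'Il integrable_completion[OF g'm] by simp
  have g'int: "(\<integral>x. indicator S x * g' x \<partial>lborel) = (\<integral>x. g x * indicator S x \<partial>lebesgue_on \<Omega>)"
    if S: "S \<in> sets borel" for S
  proof -
    have m: "(\<lambda>x. indicator S x * g' x) \<in> borel_measurable lborel" using S g'm by simp
    have "(\<integral>x. indicator S x * g' x \<partial>lborel) = (\<integral>x. indicator S x * g' x \<partial>lebesgue)"
      using integral_completion[OF m] by simp
    also have "\<dots> = (\<integral>x. G x * indicator S x \<partial>lebesgue)"
    proof (rule integral_cong_AE)
      have iS: "(indicator S :: real^'n \<Rightarrow> real) \<in> borel_measurable lebesgue"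
        by (rule measurable_completion) (use S in simp)
      have g'l: "g' \<in> borel_measurable lebesgue" by (rule measurable_completion[OF g'm])
      show "(\<lambda>x. indicator S x * g' x) \<in> borel_measurable lebesgue"
        using iS g'l by (rule borel_measurable_times)
      show "(\<lambda>x. G x * indicator S x) \<in> borel_measurable lebesgue"
        using Gm iS by (rule borel_measurable_times)
      show "AE x in lebesgue. indicator S x * g' x = G x * indicator S x"
        using Gg'l by eventually_elim simp
    qed
    finally show ?thesis using Gint by simp
  qed
  show ?thesis by (rule that[OF g'I Gg'[unfolded G_def] g'int])
qed

lemma AE_zero_if_test_integrals_zero:
  fixes g :: "real^'n::finite \<Rightarrow> real"
  assumes \<Omega>: "open \<Omega>" and g: "integrable (lebesgue_on \<Omega>) g"
    and T: "\<forall>\<phi>. test_fun \<Omega> \<phi> \<longrightarrow> (\<integral>x. g x * \<phi> x \<partial>lebesgue_on \<Omega>) = 0"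
  shows "AE x in lebesgue_on \<Omega>. g x = 0"
proof -
  have \<Omega>l: "\<Omega> \<in> sets lebesgue" by (rule sets_lebesgue_open[OF \<Omega>])
  obtain g' where g'I: "integrable lborel g'" and Gg': "AE x in lborel. indicator \<Omega> x * g x = g' x"
    and g'int: "\<And>S. S \<in> sets borel \<Longrightarrow>
      (\<integral>x. indicator S x * g' x \<partial>lborel) = (\<integral>x. g x * indicator S x \<partial>lebesgue_on \<Omega>)"
    by (rule borel_representative_on[OF \<Omega>l g]) blast
  have box0: "(\<integral>x. g x * indicator (box c d) x \<partial>lebesgue_on \<Omega>) = 0"
    if "closure (box c d) \<subseteq> \<Omega>" for c d
  proof (cases "box c d = {}")
    case True then show ?thesis by simp
  next
    case False
    then have "cbox c d \<subseteq> \<Omega>" using that by simp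
    then show ?thesis by (rule box_integral_zero_if_test_integrals_zero[OF \<Omega> g T])
  qed
  have loc: "AE x in lborel. x \<in> box a b \<longrightarrow> indicator \<Omega> x * g x = 0" if ab: "cbox a b \<subseteq> \<Omega>" for a b
  proof -
    define h where "h = (\<lambda>x. indicator (box a b) x * g' x)"
    have hI: "integrable lborel h" unfolding h_def
      using integrable_mult_indicator[of "box a b" lborel g'] g'I by simp
    have "(\<integral>x. indicator (box c d) x * h x \<partial>lborel) = 0" for c d
    proof -
      obtain c' d' where cd: "box c d \<inter> box a b = box c' d'" using box_Int_box by blast
      have "closure (box c' d') \<subseteq> closure (box a b)" unfolding cd[symmetric] by (intro closure_mono) auto
      also have "\<dots> \<subseteq> cbox a b" by (rule closure_minimal[OF box_subset_cbox closed_cbox])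
      finally have cl: "closure (box c' d') \<subseteq> \<Omega>" using ab by auto
      have "(\<integral>x. indicator (box c d) x * h x \<partial>lborel) = (\<integral>x. indicator (box c' d') x * g' x \<partial>lborel)"
        unfolding h_def cd[symmetric] by (intro Bochner_Integration.integral_cong) (auto simp: indicator_def)
      also have "\<dots> = 0" using g'int[of "box c' d'"] box0[OF cl] by simp
      finally show ?thesis .
    qed
    then have "AE x in lborel. h x = 0" by (rule AE_zero_if_box_integrals_zero[OF hI])
    then show ?thesis using Gg' by eventually_elim (auto simp: h_def)
  qed
  have "AE x in lborel. x \<in> \<Omega> \<longrightarrow> indicator \<Omega> x * g x = 0"
    by (rule AE_on_open_if_AE_on_boxes[OF \<Omega> loc])
  then have "AE x in lebesgue. x \<in> \<Omega> \<longrightarrow> g x = 0" by (intro AE_completion) auto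
  then show ?thesis using \<Omega>l by (subst AE_restrict_space_iff) auto
qed

section \<open>Square-integrable functions\<close>

lemma finite_measure_lebesgue_on_bounded:
  fixes \<Omega> :: "(real^'n::finite) set"
  assumes "open \<Omega>" "bounded \<Omega>"
  shows "finite_measure (lebesgue_on \<Omega>)"
  by (rule finite_measure_lebesgue_on, rule bounded_set_imp_lmeasurable) (use assms sets_lebesgue_open in auto)

lemma L2_funD:
  assumes "L2_fun \<Omega> f"
  shows "f \<in> borel_measurable (lebesgue_on \<Omega>)" "integrable (lebesgue_on \<Omega>) (\<lambda>x. (norm (f x))\<^sup>2)"
  using assms by (auto simp: L2_fun_def)

lemma L2_funI:
  "f \<in> borel_measurable (lebesgue_on \<Omega>) \<Longrightarrow> integrable (lebesgue_on \<Omega>) (\<lambda>x. (norm (f x))\<^sup>2) \<Longrightarrow> L2_fun \<Omega> f"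
  by (auto simp: L2_fun_def)

lemma integrable_if_L2:
  fixes f :: "real^'n::finite \<Rightarrow> 'b::euclidean_space"
  assumes \<Omega>: "open \<Omega>" "bounded \<Omega>" and f: "L2_fun \<Omega> f"
  shows "integrable (lebesgue_on \<Omega>) f"
proof -
  interpret finite_measure "lebesgue_on \<Omega>" by (rule finite_measure_lebesgue_on_bounded[OF \<Omega>])
  show ?thesis
  proof (rule Bochner_Integration.integrable_bound[where f="\<lambda>x. 1 + (norm (f x))\<^sup>2"])
    show "integrable (lebesgue_on \<Omega>) (\<lambda>x. 1 + (norm (f x))\<^sup>2)"
      using L2_funD(2)[OF f] by (intro Bochner_Integration.integrable_add) auto
    show "f \<in> borel_measurable (lebesgue_on \<Omega>)" using L2_funD(1)[OF f] .
    show "AE x in lebesgue_on \<Omega>. norm (f x) \<le> norm (1 + (norm (f x))\<^sup>2)"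
    proof (intro AE_I2)
      fix x
      have h: "0 \<le> (norm (f x) - 1/2)\<^sup>2" by simp
      have "(norm (f x) - 1/2)\<^sup>2 = (norm (f x))\<^sup>2 - norm (f x) + 1/4"
        by (simp add: power2_eq_square algebra_simps)
      then have "norm (f x) \<le> 1 + (norm (f x))\<^sup>2" using h by linarith
      then show "norm (f x) \<le> norm (1 + (norm (f x))\<^sup>2)" by simp
    qed
  qed
qed

lemma integrable_inner_L2:
  fixes f g :: "real^'n::finite \<Rightarrow> 'b::euclidean_space"
  assumes f: "L2_fun \<Omega> f" and g: "L2_fun \<Omega> g"
  shows "integrable (lebesgue_on \<Omega>) (\<lambda>x. f x \<bullet> g x)"
proof (rule Bochner_Integration.integrable_bound[where f="\<lambda>x. (norm (f x))\<^sup>2 + (norm (g x))\<^sup>2"])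
  show "integrable (lebesgue_on \<Omega>) (\<lambda>x. (norm (f x))\<^sup>2 + (norm (g x))\<^sup>2)"
    using L2_funD(2)[OF f] L2_funD(2)[OF g] by (rule Bochner_Integration.integrable_add)
  show "(\<lambda>x. f x \<bullet> g x) \<in> borel_measurable (lebesgue_on \<Omega>)"
    using L2_funD(1)[OF f] L2_funD(1)[OF g] by (rule borel_measurable_inner)
  show "AE x in lebesgue_on \<Omega>. norm (f x \<bullet> g x) \<le> norm ((norm (f x))\<^sup>2 + (norm (g x))\<^sup>2)"
  proof (intro AE_I2)
    fix x
    have "\<bar>f x \<bullet> g x\<bar> \<le> norm (f x) * norm (g x)" by (rule Cauchy_Schwarz_ineq2)
    also have "\<dots> \<le> (norm (f x))\<^sup>2 + (norm (g x))\<^sup>2"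
      using sum_squares_bound[of "norm (f x)" "norm (g x)"]
        mult_nonneg_nonneg[OF norm_ge_zero norm_ge_zero, of "f x" "g x"] by linarith
    finally show "norm (f x \<bullet> g x) \<le> norm ((norm (f x))\<^sup>2 + (norm (g x))\<^sup>2)" by simp
  qed
qed

lemma integrable_mult_L2:
  fixes f g :: "real^'n::finite \<Rightarrow> real"
  assumes f: "L2_fun \<Omega> f" and g: "L2_fun \<Omega> g"
  shows "integrable (lebesgue_on \<Omega>) (\<lambda>x. f x * g x)"
  using integrable_inner_L2[OF f g] by simp

lemma L2_fun_add_scaleR:
  fixes f g :: "real^'n::finite \<Rightarrow> 'b::euclidean_space"
  assumes f: "L2_fun \<Omega> f" and g: "L2_fun \<Omega> g"
  shows "L2_fun \<Omega> (\<lambda>x. f x + c *\<^sub>R g x)"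
proof (rule L2_funI)
  show m: "(\<lambda>x. f x + c *\<^sub>R g x) \<in> borel_measurable (lebesgue_on \<Omega>)"
    using L2_funD(1)[OF f] borel_measurable_scaleR[OF borel_measurable_const L2_funD(1)[OF g]] by (rule borel_measurable_add)
  have e: "(norm (f x + c *\<^sub>R g x))\<^sup>2 = f x \<bullet> f x + 2 * c * (f x \<bullet> g x) + c\<^sup>2 * (g x \<bullet> g x)" for x
    by (simp only: power2_norm_eq_inner) (simp add: inner_add_left inner_add_right power2_eq_square algebra_simps inner_commute)
  have "integrable (lebesgue_on \<Omega>) (\<lambda>x. f x \<bullet> f x + 2 * c * (f x \<bullet> g x) + c\<^sup>2 * (g x \<bullet> g x))"
    using integrable_inner_L2[OF f f] integrable_inner_L2[OF f g] integrable_inner_L2[OF g g]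
    by (intro Bochner_Integration.integrable_add integrable_mult_right)
  then show "integrable (lebesgue_on \<Omega>) (\<lambda>x. (norm (f x + c *\<^sub>R g x))\<^sup>2)" unfolding e .
qed

lemma L2_fun_diff:
  fixes f g :: "real^'n::finite \<Rightarrow> 'b::euclidean_space"
  shows "L2_fun \<Omega> f \<Longrightarrow> L2_fun \<Omega> g \<Longrightarrow> L2_fun \<Omega> (\<lambda>x. f x - g x)"
  using L2_fun_add_scaleR[of \<Omega> f g "-1"] by simp

lemma L2_fun_zero: "L2_fun \<Omega> (\<lambda>x. 0 :: 'b::euclidean_space)"
  by (rule L2_funI) simp_all

lemma L2_fun_if_bounded:
  fixes f :: "real^'n::finite \<Rightarrow> 'b::euclidean_space"
  assumes \<Omega>: "open \<Omega>" "bounded \<Omega>" and m: "f \<in> borel_measurable (lebesgue_on \<Omega>)"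
    and B: "\<And>x. x \<in> \<Omega> \<Longrightarrow> norm (f x) \<le> B"
  shows "L2_fun \<Omega> f"
proof (rule L2_funI[OF m])
  interpret finite_measure "lebesgue_on \<Omega>" by (rule finite_measure_lebesgue_on_bounded[OF \<Omega>])
  show "integrable (lebesgue_on \<Omega>) (\<lambda>x. (norm (f x))\<^sup>2)"
  proof (rule Bochner_Integration.integrable_bound[where f="\<lambda>x. B\<^sup>2"])
    show "integrable (lebesgue_on \<Omega>) (\<lambda>x. B\<^sup>2)" by simp
    show "(\<lambda>x. (norm (f x))\<^sup>2) \<in> borel_measurable (lebesgue_on \<Omega>)"
      using measurable_compose[OF m borel_measurable_norm] by (rule borel_measurable_power)
    show "AE x in lebesgue_on \<Omega>. norm ((norm (f x))\<^sup>2) \<le> norm (B\<^sup>2)"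
    proof (rule AE_I2)
      fix x assume x: "x \<in> space (lebesgue_on \<Omega>)"
      then have "x \<in> \<Omega>" by simp
      then have "norm (f x) \<le> B" by (rule B)
      then have "(norm (f x))\<^sup>2 \<le> B\<^sup>2" by (simp add: power_mono)
      then show "norm ((norm (f x))\<^sup>2) \<le> norm (B\<^sup>2)" by simp
    qed
  qed
qed

lemma integrable_mult_bounded:
  fixes f \<phi> :: "real^'n::finite \<Rightarrow> real"
  assumes f: "integrable M f" and m: "\<phi> \<in> borel_measurable M" and B: "\<And>x. \<bar>\<phi> x\<bar> \<le> B"
  shows "integrable M (\<lambda>x. f x * \<phi> x)"
proof (rule Bochner_Integration.integrable_bound[where f="\<lambda>x. B * f x"])
  show "integrable M (\<lambda>x. B * f x)" by (rule integrable_mult_right[OF f])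
  show "(\<lambda>x. f x * \<phi> x) \<in> borel_measurable M" using borel_measurable_integrable[OF f] m by (rule borel_measurable_times)
  show "AE x in M. norm (f x * \<phi> x) \<le> norm (B * f x)"
  proof (intro AE_I2)
    fix x
    have "\<bar>f x\<bar> * \<bar>\<phi> x\<bar> \<le> \<bar>f x\<bar> * \<bar>B\<bar>" using B[of x] by (intro mult_left_mono) auto
    then show "norm (f x * \<phi> x) \<le> norm (B * f x)" by (simp add: abs_mult mult.commute)
  qed
qed

lemma borel_measurable_vec_iff:
  fixes F :: "'a \<Rightarrow> ('b::euclidean_space)^'m::finite"
  shows "F \<in> borel_measurable M \<longleftrightarrow> (\<forall>i. (\<lambda>x. F x $ i) \<in> borel_measurable M)"
proof
  assume F: "F \<in> borel_measurable M"
  show "\<forall>i. (\<lambda>x. F x $ i) \<in> borel_measurable M"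
  proof
    fix i
    show "(\<lambda>x. F x $ i) \<in> borel_measurable M"
      unfolding borel_measurable_euclidean_space[where f="\<lambda>x. F x $ i"]
    proof
      fix u :: 'b assume "u \<in> Basis"
      have "(\<lambda>x. F x \<bullet> axis i u) \<in> borel_measurable M" using F by (intro borel_measurable_inner) auto
      then show "(\<lambda>x. F x $ i \<bullet> u) \<in> borel_measurable M" by (simp add: inner_axis)
    qed
  qed
next
  assume C: "\<forall>i. (\<lambda>x. F x $ i) \<in> borel_measurable M"
  show "F \<in> borel_measurable M"
    unfolding borel_measurable_euclidean_space[where f=F]
  proof
    fix b :: "'b^'m" assume "b \<in> Basis"
    then obtain i u where b: "b = axis i u" "u \<in> Basis" by (auto simp: Basis_vec_def)
    have "(\<lambda>x. F x $ i \<bullet> u) \<in> borel_measurable M" using C by (intro borel_measurable_inner) auto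
    then show "(\<lambda>x. F x \<bullet> b) \<in> borel_measurable M" by (simp add: b inner_axis)
  qed
qed

lemma norm_vec_power2: "(norm (x :: ('b::real_normed_vector)^'m::finite))\<^sup>2 = (\<Sum>i\<in>UNIV. (norm (x $ i))\<^sup>2)"
  by (simp add: norm_vec_def L2_set_def sum_nonneg)

lemma L2_fun_vecI:
  fixes F :: "real^'n::finite \<Rightarrow> ('b::euclidean_space)^'m::finite"
  assumes "\<And>i. L2_fun \<Omega> (\<lambda>x. F x $ i)"
  shows "L2_fun \<Omega> F"
proof (rule L2_funI)
  show "F \<in> borel_measurable (lebesgue_on \<Omega>)" using L2_funD(1)[OF assms] borel_measurable_vec_iff by blast
  have "integrable (lebesgue_on \<Omega>) (\<lambda>x. \<Sum>i\<in>UNIV. (norm (F x $ i))\<^sup>2)"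
    using L2_funD(2)[OF assms] by (intro Bochner_Integration.integrable_sum) auto
  then show "integrable (lebesgue_on \<Omega>) (\<lambda>x. (norm (F x))\<^sup>2)" by (simp only: norm_vec_power2)
qed

lemma L2_fun_vec_nth:
  fixes F :: "real^'n::finite \<Rightarrow> ('b::euclidean_space)^'m::finite"
  assumes F: "L2_fun \<Omega> F"
  shows "L2_fun \<Omega> (\<lambda>x. F x $ i)"
proof (rule L2_funI)
  show m: "(\<lambda>x. F x $ i) \<in> borel_measurable (lebesgue_on \<Omega>)" using L2_funD(1)[OF F] borel_measurable_vec_iff by blast
  show "integrable (lebesgue_on \<Omega>) (\<lambda>x. (norm (F x $ i))\<^sup>2)"
  proof (rule Bochner_Integration.integrable_bound[OF L2_funD(2)[OF F]])
    show "(\<lambda>x. (norm (F x $ i))\<^sup>2) \<in> borel_measurable (lebesgue_on \<Omega>)"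
      using measurable_compose[OF m borel_measurable_norm] by (rule borel_measurable_power)
    show "AE x in lebesgue_on \<Omega>. norm ((norm (F x $ i))\<^sup>2) \<le> norm ((norm (F x))\<^sup>2)"
    proof (intro AE_I2)
      fix x
      have "(norm (F x $ i))\<^sup>2 \<le> (\<Sum>j\<in>UNIV. (norm (F x $ j))\<^sup>2)"
        by (rule member_le_sum) auto
      then show "norm ((norm (F x $ i))\<^sup>2) \<le> norm ((norm (F x))\<^sup>2)" by (simp add: norm_vec_power2)
    qed
  qed
qed

lemma L2_fun_scaleR:
  fixes f :: "real^'n::finite \<Rightarrow> 'b::euclidean_space"
  shows "L2_fun \<Omega> f \<Longrightarrow> L2_fun \<Omega> (\<lambda>x. c *\<^sub>R f x)"
  using L2_fun_add_scaleR[OF L2_fun_zero, of \<Omega> f c] by simp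

lemma transpose_add: "transpose (A + B) = transpose A + transpose (B :: real^'n^'m)"
  by (simp add: transpose_def vec_eq_iff)

lemma transpose_zero: "transpose (0 :: real^'n^'m) = 0"
  by (simp add: transpose_def vec_eq_iff)

lemma L2_fun_transpose:
  fixes F :: "real^'n::finite \<Rightarrow> real^'m::finite^'k::finite"
  assumes F: "L2_fun \<Omega> F"
  shows "L2_fun \<Omega> (\<lambda>x. transpose (F x))"
proof (rule L2_fun_vecI)
  fix j
  show "L2_fun \<Omega> (\<lambda>x. transpose (F x) $ j)"
  proof (rule L2_fun_vecI)
    fix i
    have "L2_fun \<Omega> (\<lambda>x. F x $ i $ j)" by (intro L2_fun_vec_nth F)
    then show "L2_fun \<Omega> (\<lambda>x. transpose (F x) $ j $ i)" by (simp add: transpose_def)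
  qed
qed

lemma powr_le_1_plus_power2: "0 \<le> (r::real) \<Longrightarrow> 0 \<le> (p::real) \<Longrightarrow> p \<le> 2 \<Longrightarrow> r powr p \<le> 1 + r\<^sup>2"
proof -
  assume r: "0 \<le> r" and p: "0 \<le> p" "p \<le> 2"
  show ?thesis
  proof (cases "r \<le> 1")
    case True
    then have "r powr p \<le> 1" using r p by (intro powr_le1) auto
    then show ?thesis by (simp add: add_increasing2)
  next
    case False
    then have "r powr p \<le> r powr 2" using p by (intro powr_mono) auto
    also have "\<dots> = r\<^sup>2" using r by simp
    finally show ?thesis by simp
  qed
qed

lemma Lp_fun_if_L2:
  fixes v :: "real^'n::finite \<Rightarrow> 'b::euclidean_space"
  assumes \<Omega>: "open \<Omega>" "bounded \<Omega>" and p: "0 \<le> p" "p \<le> 2" and v: "L2_fun \<Omega> v"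
  shows "Lp_fun \<Omega> p v"
  unfolding Lp_fun_def
proof
  show m: "v \<in> borel_measurable (lebesgue_on \<Omega>)" using L2_funD(1)[OF v] .
  interpret finite_measure "lebesgue_on \<Omega>" by (rule finite_measure_lebesgue_on_bounded[OF \<Omega>])
  show "integrable (lebesgue_on \<Omega>) (\<lambda>x. norm (v x) powr p)"
  proof (rule Bochner_Integration.integrable_bound[where f="\<lambda>x. 1 + (norm (v x))\<^sup>2"])
    show "integrable (lebesgue_on \<Omega>) (\<lambda>x. 1 + (norm (v x))\<^sup>2)"
      using L2_funD(2)[OF v] by (intro Bochner_Integration.integrable_add) auto
    show "(\<lambda>x. norm (v x) powr p) \<in> borel_measurable (lebesgue_on \<Omega>)" using m by measurable
    show "AE x in lebesgue_on \<Omega>. norm (norm (v x) powr p) \<le> norm (1 + (norm (v x))\<^sup>2)"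
      using powr_le_1_plus_power2[OF norm_ge_zero p] by (intro AE_I2) simp
  qed
qed

definition symm :: "real^'n^'n \<Rightarrow> real^'n^'n" where
  "symm J = (1/2) *\<^sub>R (J + transpose J)"

lemma symm_add_scaleR: "symm (J + t *\<^sub>R K) = symm J + t *\<^sub>R symm K"
  by (simp add: symm_def transpose_add transpose_scalar algebra_simps)

lemma symgrad_eq_symm: "symgrad \<Omega> w x = symm (wjac \<Omega> w x)"
  by (simp add: symgrad_def symm_def)

lemma L2_fun_symm:
  fixes J :: "real^'n::finite \<Rightarrow> real^'m::finite^'m"
  assumes J: "L2_fun \<Omega> J"
  shows "L2_fun \<Omega> (\<lambda>x. symm (J x))"
proof -
  have "L2_fun \<Omega> (\<lambda>x. J x + 1 *\<^sub>R transpose (J x))"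
    by (rule L2_fun_add_scaleR[OF J L2_fun_transpose[OF J]])
  then have "L2_fun \<Omega> (\<lambda>x. (1/2) *\<^sub>R (J x + 1 *\<^sub>R transpose (J x)))" by (rule L2_fun_scaleR)
  then show ?thesis by (simp add: symm_def)
qed

section \<open>Weak gradients\<close>

lemma test_fun_measurable:
  fixes \<phi> :: "real^'n::finite \<Rightarrow> real"
  assumes "open \<Omega>" "test_fun \<Omega> \<phi>"
  shows "\<phi> \<in> borel_measurable (lebesgue_on \<Omega>)" "partial \<phi> i \<in> borel_measurable (lebesgue_on \<Omega>)"
  using continuous_imp_measurable_on_open[OF assms(1) test_fun_bounds(1)[OF assms(2)]]
    continuous_imp_measurable_on_open[OF assms(1) test_fun_bounds(3)[OF assms(2)]] by auto

lemma integrable_vec_nth: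
  fixes G :: "real^'n::finite \<Rightarrow> real^'m::finite"
  assumes "integrable M G"
  shows "integrable M (\<lambda>x. G x $ i)"
  using integrable_inner_left[OF assms, of "axis i 1"] by (simp add: cart_eq_inner_axis)

lemma integrable_vec_nth_if_L2:
  fixes G :: "real^'n::finite \<Rightarrow> real^'m::finite"
  assumes "open \<Omega>" "bounded \<Omega>" "L2_fun \<Omega> G"
  shows "integrable (lebesgue_on \<Omega>) (\<lambda>x. G x $ i)"
  by (rule integrable_vec_nth[OF integrable_if_L2[OF assms]])

lemma integrable_mult_test_fun:
  fixes f :: "real^'n::finite \<Rightarrow> real"
  assumes "open \<Omega>" "integrable (lebesgue_on \<Omega>) f" "test_fun \<Omega> \<phi>"
  shows "integrable (lebesgue_on \<Omega>) (\<lambda>x. f x * \<phi> x)"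
    "integrable (lebesgue_on \<Omega>) (\<lambda>x. f x * partial \<phi> i x)"
proof -
  obtain B where B: "\<forall>x. \<bar>\<phi> x\<bar> \<le> B" using test_fun_bounds(2)[OF assms(3)] by blast
  obtain B' where B': "\<forall>x. \<bar>partial \<phi> i x\<bar> \<le> B'" using test_fun_bounds(4)[OF assms(3)] by blast
  show "integrable (lebesgue_on \<Omega>) (\<lambda>x. f x * \<phi> x)"
    by (rule integrable_mult_bounded[OF assms(2) test_fun_measurable(1)[OF assms(1,3)]]) (use B in blast)
  show "integrable (lebesgue_on \<Omega>) (\<lambda>x. f x * partial \<phi> i x)"
    by (rule integrable_mult_bounded[OF assms(2) test_fun_measurable(2)[OF assms(1,3)]]) (use B' in blast)
qed

lemma has_weak_grad_unique:
  fixes u :: "real^'n::finite \<Rightarrow> real"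
  assumes \<Omega>: "open \<Omega>" "bounded \<Omega>" and G1: "L2_fun \<Omega> G1" and G2: "L2_fun \<Omega> G2"
    and w1: "has_weak_grad \<Omega> u G1" and w2: "has_weak_grad \<Omega> u G2"
  shows "AE x in lebesgue_on \<Omega>. G1 x = G2 x"
proof -
  let ?M = "lebesgue_on \<Omega>"
  have "AE x in ?M. G1 x $ i - G2 x $ i = 0" for i
  proof (rule AE_zero_if_test_integrals_zero[OF \<Omega>(1)])
    have i1: "integrable ?M (\<lambda>x. G1 x $ i)" by (rule integrable_vec_nth_if_L2[OF \<Omega> G1])
    have i2: "integrable ?M (\<lambda>x. G2 x $ i)" by (rule integrable_vec_nth_if_L2[OF \<Omega> G2])
    show "integrable ?M (\<lambda>x. G1 x $ i - G2 x $ i)" using i1 i2 by (rule Bochner_Integration.integrable_diff)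
    show "\<forall>\<phi>. test_fun \<Omega> \<phi> \<longrightarrow> (\<integral>x. (G1 x $ i - G2 x $ i) * \<phi> x \<partial>?M) = 0"
    proof (intro allI impI)
      fix \<phi> assume tf: "test_fun \<Omega> \<phi>"
      have "(\<integral>x. (G1 x $ i - G2 x $ i) * \<phi> x \<partial>?M) = (\<integral>x. G1 x $ i * \<phi> x - G2 x $ i * \<phi> x \<partial>?M)"
        by (simp add: left_diff_distrib)
      also have "\<dots> = (\<integral>x. G1 x $ i * \<phi> x \<partial>?M) - (\<integral>x. G2 x $ i * \<phi> x \<partial>?M)"
        by (rule Bochner_Integration.integral_diff[OF integrable_mult_test_fun(1)[OF \<Omega>(1) i1 tf] integrable_mult_test_fun(1)[OF \<Omega>(1) i2 tf]])
      also have "\<dots> = 0"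
        using w1[unfolded has_weak_grad_def, rule_format, OF tf, of i]
          w2[unfolded has_weak_grad_def, rule_format, OF tf, of i] by linarith
      finally show "(\<integral>x. (G1 x $ i - G2 x $ i) * \<phi> x \<partial>?M) = 0" .
    qed
  qed
  then have "AE x in ?M. \<forall>i. G1 x $ i - G2 x $ i = 0" by (simp add: eventually_all_finite)
  then show ?thesis by eventually_elim (simp add: vec_eq_iff)
qed

lemma H1_wgrad:
  assumes "H1 \<Omega> u"
  shows "L2_fun \<Omega> (wgrad \<Omega> u)" "has_weak_grad \<Omega> u (wgrad \<Omega> u)" "L2_fun \<Omega> u"
proof -
  have "\<exists>G. L2_fun \<Omega> G \<and> has_weak_grad \<Omega> u G" using assms by (simp add: H1_def)
  then have "L2_fun \<Omega> (wgrad \<Omega> u) \<and> has_weak_grad \<Omega> u (wgrad \<Omega> u)"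
    unfolding wgrad_def by (rule someI_ex)
  then show "L2_fun \<Omega> (wgrad \<Omega> u)" "has_weak_grad \<Omega> u (wgrad \<Omega> u)" by auto
  show "L2_fun \<Omega> u" using assms by (simp add: H1_def)
qed

lemma has_weak_grad_add_scaled:
  fixes u v :: "real^'n::finite \<Rightarrow> real"
  assumes \<Omega>: "open \<Omega>" "bounded \<Omega>" and u: "L2_fun \<Omega> u" and v: "L2_fun \<Omega> v"
    and G: "L2_fun \<Omega> G" and H: "L2_fun \<Omega> H"
    and wu: "has_weak_grad \<Omega> u G" and wv: "has_weak_grad \<Omega> v H"
  shows "has_weak_grad \<Omega> (\<lambda>x. u x + c * v x) (\<lambda>x. G x + c *\<^sub>R H x)"
  unfolding has_weak_grad_def
proof (intro allI impI)
  let ?M = "lebesgue_on \<Omega>"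
  fix \<phi> i assume tf: "test_fun \<Omega> \<phi>"
  have iu: "integrable ?M u" by (rule integrable_if_L2[OF \<Omega> u])
  have iv: "integrable ?M v" by (rule integrable_if_L2[OF \<Omega> v])
  have iG: "integrable ?M (\<lambda>x. G x $ i)" by (rule integrable_vec_nth_if_L2[OF \<Omega> G])
  have iH: "integrable ?M (\<lambda>x. H x $ i)" by (rule integrable_vec_nth_if_L2[OF \<Omega> H])
  have e1: "(\<integral>x. u x * partial \<phi> i x \<partial>?M) = - (\<integral>x. G x $ i * \<phi> x \<partial>?M)"
    by (rule wu[unfolded has_weak_grad_def, rule_format, OF tf])
  have e2: "(\<integral>x. v x * partial \<phi> i x \<partial>?M) = - (\<integral>x. H x $ i * \<phi> x \<partial>?M)"
    by (rule wv[unfolded has_weak_grad_def, rule_format, OF tf])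
  have "(\<integral>x. (u x + c * v x) * partial \<phi> i x \<partial>?M) = (\<integral>x. u x * partial \<phi> i x + c * (v x * partial \<phi> i x) \<partial>?M)"
    by (rule Bochner_Integration.integral_cong) (simp_all add: ring_distribs)
  also have "\<dots> = (\<integral>x. u x * partial \<phi> i x \<partial>?M) + (\<integral>x. c * (v x * partial \<phi> i x) \<partial>?M)"
    by (rule Bochner_Integration.integral_add[OF integrable_mult_test_fun(2)[OF \<Omega>(1) iu tf] integrable_mult_right[OF integrable_mult_test_fun(2)[OF \<Omega>(1) iv tf]]])
  also have "\<dots> = - (\<integral>x. G x $ i * \<phi> x \<partial>?M) - c * (\<integral>x. H x $ i * \<phi> x \<partial>?M)"
    unfolding integral_mult_right_zero e1 e2 by simp
  also have "\<dots> = - ((\<integral>x. G x $ i * \<phi> x \<partial>?M) + (\<integral>x. c * (H x $ i * \<phi> x) \<partial>?M))"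
    unfolding integral_mult_right_zero by simp
  also have "\<dots> = - (\<integral>x. G x $ i * \<phi> x + c * (H x $ i * \<phi> x) \<partial>?M)"
    by (subst Bochner_Integration.integral_add[OF integrable_mult_test_fun(1)[OF \<Omega>(1) iG tf] integrable_mult_right[OF integrable_mult_test_fun(1)[OF \<Omega>(1) iH tf]]]) (rule refl)
  also have "\<dots> = - (\<integral>x. (G x + c *\<^sub>R H x) $ i * \<phi> x \<partial>?M)"
    by (rule arg_cong[where f=uminus], rule Bochner_Integration.integral_cong) (simp_all add: ring_distribs)
  finally show "(\<integral>x. (u x + c * v x) * partial \<phi> i x \<partial>?M) = - (\<integral>x. (G x + c *\<^sub>R H x) $ i * \<phi> x \<partial>?M)" .
qed

lemma H1_add_scaled:
  fixes u v :: "real^'n::finite \<Rightarrow> real"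
  assumes \<Omega>: "open \<Omega>" "bounded \<Omega>" and u: "H1 \<Omega> u" and v: "H1 \<Omega> v"
  shows "H1 \<Omega> (\<lambda>x. u x + c * v x)"
    "AE x in lebesgue_on \<Omega>. wgrad \<Omega> (\<lambda>x. u x + c * v x) x = wgrad \<Omega> u x + c *\<^sub>R wgrad \<Omega> v x"
proof -
  note U = H1_wgrad[OF u] and V = H1_wgrad[OF v]
  have hw: "has_weak_grad \<Omega> (\<lambda>x. u x + c * v x) (\<lambda>x. wgrad \<Omega> u x + c *\<^sub>R wgrad \<Omega> v x)"
    by (rule has_weak_grad_add_scaled[OF \<Omega> U(3) V(3) U(1) V(1) U(2) V(2)])
  have L: "L2_fun \<Omega> (\<lambda>x. wgrad \<Omega> u x + c *\<^sub>R wgrad \<Omega> v x)" by (rule L2_fun_add_scaleR[OF U(1) V(1)])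
  have Luv: "L2_fun \<Omega> (\<lambda>x. u x + c * v x)" using L2_fun_add_scaleR[OF U(3) V(3), of c] by simp
  show H: "H1 \<Omega> (\<lambda>x. u x + c * v x)" unfolding H1_def using Luv L hw by blast
  note W = H1_wgrad[OF H]
  show "AE x in lebesgue_on \<Omega>. wgrad \<Omega> (\<lambda>x. u x + c * v x) x = wgrad \<Omega> u x + c *\<^sub>R wgrad \<Omega> v x"
    by (rule has_weak_grad_unique[OF \<Omega> W(1) L W(2) hw])
qed

lemma H1_zero:
  fixes \<Omega> :: "(real^'n::finite) set"
  assumes \<Omega>: "open \<Omega>" "bounded \<Omega>"
  shows "H1 \<Omega> (\<lambda>x. 0)" "AE x in lebesgue_on \<Omega>. wgrad \<Omega> (\<lambda>x. 0) x = 0"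
proof -
  have hw: "has_weak_grad \<Omega> (\<lambda>x::real^'n. 0) (\<lambda>x. 0)" unfolding has_weak_grad_def by simp
  have L0: "L2_fun \<Omega> (\<lambda>x::real^'n. 0::real)" by (rule L2_fun_zero)
  have L1: "L2_fun \<Omega> (\<lambda>x::real^'n. 0::real^'n)" by (rule L2_fun_zero)
  show H: "H1 \<Omega> (\<lambda>x. 0)" unfolding H1_def using hw L0 L1 by blast
  show "AE x in lebesgue_on \<Omega>. wgrad \<Omega> (\<lambda>x. 0) x = 0"
    by (rule has_weak_grad_unique[OF \<Omega> H1_wgrad(1)[OF H] L2_fun_zero H1_wgrad(2)[OF H] hw])
qed

lemma symgrad_symmetric: "transpose (symgrad \<Omega> w x) = symgrad \<Omega> w x"
  by (simp add: symgrad_def transpose_scalar transpose_add add.commute)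

lemma H1v_L2:
  fixes w :: "real^'n::finite \<Rightarrow> real^'n"
  assumes "H1v \<Omega> w"
  shows "L2_fun \<Omega> w" "L2_fun \<Omega> (wjac \<Omega> w)" "L2_fun \<Omega> (symgrad \<Omega> w)"
proof -
  have H: "H1 \<Omega> (\<lambda>x. w x $ i)" for i using assms by (simp add: H1v_def)
  show "L2_fun \<Omega> w" by (rule L2_fun_vecI) (rule H1_wgrad(3)[OF H])
  show J: "L2_fun \<Omega> (wjac \<Omega> w)"
  proof (rule L2_fun_vecI)
    fix i show "L2_fun \<Omega> (\<lambda>x. wjac \<Omega> w x $ i)" using H1_wgrad(1)[OF H[of i]] by (simp add: wjac_def)
  qed
  have "L2_fun \<Omega> (\<lambda>x. wjac \<Omega> w x + 1 *\<^sub>R transpose (wjac \<Omega> w x))"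
    by (rule L2_fun_add_scaleR[OF J L2_fun_transpose[OF J]])
  then have "L2_fun \<Omega> (\<lambda>x. (1/2) *\<^sub>R (wjac \<Omega> w x + 1 *\<^sub>R transpose (wjac \<Omega> w x)))" by (rule L2_fun_scaleR)
  then show "L2_fun \<Omega> (symgrad \<Omega> w)" by (simp add: symgrad_def[abs_def])
qed

lemma H1v_add_scaled:
  fixes w \<omega> :: "real^'n::finite \<Rightarrow> real^'n"
  assumes \<Omega>: "open \<Omega>" "bounded \<Omega>" and w: "H1v \<Omega> w" and o: "H1v \<Omega> \<omega>"
  shows "H1v \<Omega> (\<lambda>x. w x + c *\<^sub>R \<omega> x)"
    "AE x in lebesgue_on \<Omega>. wjac \<Omega> (\<lambda>x. w x + c *\<^sub>R \<omega> x) x = wjac \<Omega> w x + c *\<^sub>R wjac \<Omega> \<omega> x"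
    "AE x in lebesgue_on \<Omega>. symgrad \<Omega> (\<lambda>x. w x + c *\<^sub>R \<omega> x) x = symgrad \<Omega> w x + c *\<^sub>R symgrad \<Omega> \<omega> x"
proof -
  have Hw: "H1 \<Omega> (\<lambda>x. w x $ i)" for i using w by (simp add: H1v_def)
  have Ho: "H1 \<Omega> (\<lambda>x. \<omega> x $ i)" for i using o by (simp add: H1v_def)
  have e: "(\<lambda>x. (w x + c *\<^sub>R \<omega> x) $ i) = (\<lambda>x. w x $ i + c * \<omega> x $ i)" for i by simp
  show "H1v \<Omega> (\<lambda>x. w x + c *\<^sub>R \<omega> x)" unfolding H1v_def e using H1_add_scaled(1)[OF \<Omega> Hw Ho] by blast
  have "AE x in lebesgue_on \<Omega>. wgrad \<Omega> (\<lambda>x. (w x + c *\<^sub>R \<omega> x) $ i) x = wgrad \<Omega> (\<lambda>x. w x $ i) x + c *\<^sub>R wgrad \<Omega> (\<lambda>x. \<omega> x $ i) x" for i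
    unfolding e by (rule H1_add_scaled(2)[OF \<Omega> Hw Ho])
  then have "AE x in lebesgue_on \<Omega>. \<forall>i. wgrad \<Omega> (\<lambda>x. (w x + c *\<^sub>R \<omega> x) $ i) x = wgrad \<Omega> (\<lambda>x. w x $ i) x + c *\<^sub>R wgrad \<Omega> (\<lambda>x. \<omega> x $ i) x"
    by (simp add: eventually_all_finite)
  then show J: "AE x in lebesgue_on \<Omega>. wjac \<Omega> (\<lambda>x. w x + c *\<^sub>R \<omega> x) x = wjac \<Omega> w x + c *\<^sub>R wjac \<Omega> \<omega> x"
    by eventually_elim (simp add: wjac_def vec_eq_iff)
  then show "AE x in lebesgue_on \<Omega>. symgrad \<Omega> (\<lambda>x. w x + c *\<^sub>R \<omega> x) x = symgrad \<Omega> w x + c *\<^sub>R symgrad \<Omega> \<omega> x"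
    by eventually_elim (simp add: symgrad_def transpose_add transpose_scalar algebra_simps)
qed

lemma H1v_zero:
  fixes \<Omega> :: "(real^'n::finite) set"
  assumes \<Omega>: "open \<Omega>" "bounded \<Omega>"
  shows "H1v \<Omega> (\<lambda>x. 0 :: real^'n)"
    "AE x in lebesgue_on \<Omega>. wjac \<Omega> (\<lambda>x. 0 :: real^'n) x = 0"
    "AE x in lebesgue_on \<Omega>. symgrad \<Omega> (\<lambda>x. 0 :: real^'n) x = 0"
proof -
  have e: "(\<lambda>x. (0::real^'n) $ i) = (\<lambda>x. 0)" for i by simp
  show "H1v \<Omega> (\<lambda>x. 0 :: real^'n)" unfolding H1v_def e using H1_zero(1)[OF \<Omega>] by blast
  have "AE x in lebesgue_on \<Omega>. \<forall>i. wgrad \<Omega> (\<lambda>x. (0::real^'n) $ i) x = 0"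
    unfolding e using H1_zero(2)[OF \<Omega>] by (simp add: eventually_all_finite)
  then show J: "AE x in lebesgue_on \<Omega>. wjac \<Omega> (\<lambda>x. 0 :: real^'n) x = 0"
    by eventually_elim (simp add: wjac_def vec_eq_iff)
  then show "AE x in lebesgue_on \<Omega>. symgrad \<Omega> (\<lambda>x. 0 :: real^'n) x = 0"
    by eventually_elim (simp add: symgrad_def transpose_zero)
qed

section \<open>The Huber function\<close>

text \<open>In the two scalar lemmas, \<open>s\<close>, \<open>t\<close>, \<open>b\<close> and \<open>d\<close> stand for \<open>norm a\<close>, \<open>norm (a + b)\<close>,
\<open>norm b\<close> and \<open>a \<bullet> b\<close>.\<close>

lemma huber_ge_linearization_real:
  fixes \<gamma> s t b d :: real
  assumes g: "\<gamma> > 0" and s: "s \<ge> 0" and t: "t \<ge> 0" and b: "b \<ge> 0"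
    and tt: "t\<^sup>2 = s\<^sup>2 + 2 * d + b\<^sup>2" and cs: "s * t \<ge> s\<^sup>2 + d" and tri: "t \<le> s + b"
  shows "huber \<gamma> t \<ge> huber \<gamma> s + d / max s \<gamma>"
proof (cases "s < \<gamma>")
  case True
  then have m: "max s \<gamma> = \<gamma>" by simp
  show ?thesis
  proof (cases "t < \<gamma>")
    case True
    have "s\<^sup>2 / (2 * \<gamma>) + d / \<gamma> \<le> t\<^sup>2 / (2 * \<gamma>)"
      using g tt by (simp add: field_simps)
    then show ?thesis using True \<open>s < \<gamma>\<close> m by (simp add: huber_def)
  next
    case False
    have "0 \<le> t - \<gamma>" "t - \<gamma> \<le> b" using False tri True by auto
    then have "(t - \<gamma>)\<^sup>2 \<le> b\<^sup>2" by (simp add: power_mono)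
    then have "s\<^sup>2 / (2 * \<gamma>) + d / \<gamma> \<le> t - \<gamma> / 2"
      using g tt by (simp add: field_simps power2_eq_square)
    then show ?thesis using False \<open>s < \<gamma>\<close> m by (simp add: huber_def)
  qed
next
  case False
  then have m: "max s \<gamma> = s" and sp: "s > 0" using g by auto
  have A: "s + d / s \<le> t"
  proof -
    have "s * (s + d / s) = s\<^sup>2 + d" using sp by (simp add: field_simps power2_eq_square)
    then have "s * (s + d / s) \<le> s * t" using cs by simp
    then show ?thesis using sp by simp
  qed
  show ?thesis
  proof (cases "t < \<gamma>")
    case True
    have "0 \<le> (t - \<gamma>)\<^sup>2" by simp
    then have "t - \<gamma> / 2 \<le> t\<^sup>2 / (2 * \<gamma>)" using g by (simp add: field_simps power2_eq_square)
    then show ?thesis using True False m A by (simp add: huber_def)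
  next
    case False
    then show ?thesis using \<open>\<not> s < \<gamma>\<close> m A by (simp add: huber_def)
  qed
qed

lemma huber_le_quadratic_bound_real:
  fixes \<gamma> s t b d :: real
  assumes g: "\<gamma> > 0" and s: "s \<ge> 0" and t: "t \<ge> 0" and b: "b \<ge> 0"
    and tt: "t\<^sup>2 = s\<^sup>2 + 2 * d + b\<^sup>2" and cs: "s * t \<ge> s\<^sup>2 + d"
  shows "huber \<gamma> t \<le> huber \<gamma> s + d / max s \<gamma> + b\<^sup>2 / (2 * \<gamma>)"
proof (cases "s < \<gamma>")
  case True
  then have m: "max s \<gamma> = \<gamma>" by simp
  have E: "s\<^sup>2 / (2 * \<gamma>) + d / \<gamma> + b\<^sup>2 / (2 * \<gamma>) = t\<^sup>2 / (2 * \<gamma>)"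
    using g tt by (simp add: field_simps)
  show ?thesis
  proof (cases "t < \<gamma>")
    case True
    then show ?thesis using \<open>s < \<gamma>\<close> m E by (simp add: huber_def)
  next
    case False
    have "0 \<le> (t - \<gamma>)\<^sup>2" by simp
    then have "t - \<gamma> / 2 \<le> t\<^sup>2 / (2 * \<gamma>)" using g by (simp add: field_simps power2_eq_square)
    then show ?thesis using False \<open>s < \<gamma>\<close> m E by (simp add: huber_def)
  qed
next
  case False
  then have m: "max s \<gamma> = s" and sp: "s > 0" and sg: "s \<ge> \<gamma>" using g by auto
  show ?thesis
  proof (cases "t < \<gamma>")
    case True
    have dl: "d < s * (\<gamma> - s)" using cs True sp
      by (smt (verit, best) mult_strict_left_mono power2_eq_square right_diff_distrib)
    have key: "(s - \<gamma>) * ((s - \<gamma>) + 2 * d / s) \<le> 0"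
    proof -
      have "d / s < \<gamma> - s" using dl sp by (simp add: field_simps)
      moreover have "2 * d / s = 2 * (d / s)" by simp
      ultimately have "(s - \<gamma>) + 2 * d / s \<le> 0" using sg by linarith
      then show ?thesis using sg by (simp add: mult_nonneg_nonpos)
    qed
    have "t\<^sup>2 / (2 * \<gamma>) \<le> s - \<gamma> / 2 + d / s + b\<^sup>2 / (2 * \<gamma>)"
    proof -
      have e: "(s - \<gamma>) * ((s - \<gamma>) + 2 * d / s) = s\<^sup>2 - 2 * \<gamma> * s + \<gamma>\<^sup>2 + 2 * d - 2 * \<gamma> * d/s"
        using sp by (simp add: field_simps power2_eq_square)
      have "t\<^sup>2 \<le> 2 * \<gamma> * s - \<gamma>\<^sup>2 + 2 * \<gamma> * d/s + b\<^sup>2" using key tt unfolding e by linarith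
      then have "t\<^sup>2 / (2 * \<gamma>) \<le> (2 * \<gamma> * s - \<gamma>\<^sup>2 + 2 * \<gamma> * d/s + b\<^sup>2) / (2 * \<gamma>)"
        using g by (simp add: divide_right_mono)
      also have "\<dots> = s - \<gamma> / 2 + d / s + b\<^sup>2 / (2 * \<gamma>)" using g sp by (simp add: field_simps power2_eq_square)
      finally show ?thesis .
    qed
    then show ?thesis using True sg m by (simp add: huber_def)
  next
    case False
    have "t \<le> (s\<^sup>2 + t\<^sup>2) / (2 * s)"
    proof -
      have "0 \<le> (s - t)\<^sup>2" by simp
      then have "2 * s * t \<le> s\<^sup>2 + t\<^sup>2" by (simp add: power2_eq_square algebra_simps)
      then show ?thesis using sp by (simp add: field_simps)
    qed
    also have "(s\<^sup>2 + t\<^sup>2) / (2 * s) = s + d / s + b\<^sup>2 / (2 * s)" using tt sp by (simp add: field_simps power2_eq_square)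
    also have "b\<^sup>2 / (2 * s) \<le> b\<^sup>2 / (2 * \<gamma>)" using sg g by (intro divide_left_mono) auto
    finally have "t \<le> s + d / s + b\<^sup>2 / (2 * \<gamma>)" by simp
    then show ?thesis using False sg m by (simp add: huber_def)
  qed
qed

definition huber_grad :: "real \<Rightarrow> 'a::real_inner \<Rightarrow> 'a" where
  "huber_grad \<gamma> a = (1 / max (norm a) \<gamma>) *\<^sub>R a"

lemma power2_norm_add:
  fixes a b :: "'a::real_inner"
  shows "(norm (a + b))\<^sup>2 = (norm a)\<^sup>2 + 2 * (a \<bullet> b) + (norm b)\<^sup>2"
  by (simp add: power2_norm_eq_inner inner_add_left inner_add_right inner_commute)

lemma norm_mult_norm_add_ge:
  fixes a b :: "'a::real_inner"
  shows "norm a * norm (a + b) \<ge> (norm a)\<^sup>2 + a \<bullet> b"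
proof -
  have "a \<bullet> (a + b) \<le> norm a * norm (a + b)" by (rule norm_cauchy_schwarz)
  then show ?thesis by (simp add: inner_add_right power2_norm_eq_inner)
qed

lemma inner_huber_grad: "huber_grad \<gamma> a \<bullet> b = (a \<bullet> b) / max (norm a) \<gamma>"
  by (simp add: huber_grad_def)

lemma huber_norm_add_ge:
  fixes a b :: "'a::real_inner"
  assumes "\<gamma> > 0"
  shows "huber \<gamma> (norm (a + b)) \<ge> huber \<gamma> (norm a) + huber_grad \<gamma> a \<bullet> b"
  unfolding inner_huber_grad
  by (rule huber_ge_linearization_real[OF assms norm_ge_zero norm_ge_zero norm_ge_zero
        power2_norm_add norm_mult_norm_add_ge norm_triangle_ineq])

lemma huber_norm_add_le:
  fixes a b :: "'a::real_inner"
  assumes "\<gamma> > 0"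
  shows "huber \<gamma> (norm (a + b)) \<le> huber \<gamma> (norm a) + huber_grad \<gamma> a \<bullet> b + (norm b)\<^sup>2 / (2 * \<gamma>)"
  unfolding inner_huber_grad
  by (rule huber_le_quadratic_bound_real[OF assms norm_ge_zero norm_ge_zero norm_ge_zero
        power2_norm_add norm_mult_norm_add_ge])

lemma huber_nonneg: "\<gamma> > 0 \<Longrightarrow> r \<ge> 0 \<Longrightarrow> huber \<gamma> r \<ge> 0"
  by (auto simp: huber_def)

lemma huber_le_square: "\<gamma> > 0 \<Longrightarrow> huber \<gamma> r \<le> r\<^sup>2 / (2 * \<gamma>)"
proof -
  assume g: "\<gamma> > 0"
  have "0 \<le> (r - \<gamma>)\<^sup>2" by simp
  then have "r - \<gamma> / 2 \<le> r\<^sup>2 / (2 * \<gamma>)" using g by (simp add: field_simps power2_eq_square)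
  then show ?thesis by (simp add: huber_def)
qed

lemma borel_measurable_huber: "huber \<gamma> \<in> borel_measurable borel"
  unfolding huber_def[abs_def] by measurable

lemma norm_huber_grad_le: "\<gamma> > 0 \<Longrightarrow> norm (huber_grad \<gamma> a) \<le> 1"
  by (auto simp: huber_grad_def divide_le_eq max_def)

lemma borel_measurable_huber_grad:
  fixes f :: "_ \<Rightarrow> 'a::euclidean_space"
  shows "f \<in> borel_measurable M \<Longrightarrow> (\<lambda>x. huber_grad \<gamma> (f x)) \<in> borel_measurable M"
  unfolding huber_grad_def by measurable

lemma scaleR_max_eq_iff_huber_grad:
  fixes q a :: "'a::real_inner"
  assumes "\<gamma> > 0"
  shows "max (norm a) \<gamma> *\<^sub>R q - c *\<^sub>R a = 0 \<longleftrightarrow> q = c *\<^sub>R huber_grad \<gamma> a"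
proof -
  have m: "max (norm a) \<gamma> \<noteq> 0" using assms by simp
  have "max (norm a) \<gamma> *\<^sub>R q - c *\<^sub>R a = 0 \<longleftrightarrow>
        max (norm a) \<gamma> *\<^sub>R q = max (norm a) \<gamma> *\<^sub>R (c *\<^sub>R huber_grad \<gamma> a)"
    using m by (simp add: huber_grad_def)
  also have "\<dots> \<longleftrightarrow> q = c *\<^sub>R huber_grad \<gamma> a" using m scaleR_cancel_left by blast
  finally show ?thesis .
qed

lemma eq_0_if_linear_plus_quadratic_nonneg:
  fixes L K :: real
  assumes "\<And>t. 0 \<le> t * L + t\<^sup>2 * K"
  shows "L = 0"
proof -
  define k where "k = \<bar>K\<bar> + 1"
  have k: "k > 0" "K \<le> k - 1" unfolding k_def by auto
  define t where "t = - L / k"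
  have "0 \<le> t * L + t\<^sup>2 * K" by (rule assms)
  also have "\<dots> \<le> t * L + t\<^sup>2 * (k - 1)" using k by (intro add_left_mono mult_left_mono) auto
  also have "\<dots> = - L\<^sup>2 / k\<^sup>2" unfolding t_def using k by (simp add: field_simps power2_eq_square)
  finally have "L\<^sup>2 / k\<^sup>2 \<le> 0" by simp
  then show ?thesis using k by (simp add: divide_le_0_iff)
qed

lemma borel_measurable_if_continuous_on_closure:
  fixes c :: "real^'n::finite \<Rightarrow> real"
  assumes "open \<Omega>" "continuous_on (closure \<Omega>) c"
  shows "c \<in> borel_measurable (lebesgue_on \<Omega>)"
  by (rule continuous_imp_measurable_on_sets_lebesgue[OF
        continuous_on_subset[OF assms(2) closure_subset] sets_lebesgue_open[OF assms(1)]])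

lemma bounded_above_if_continuous_on_closure:
  fixes c :: "real^'n::finite \<Rightarrow> real"
  assumes "bounded \<Omega>" "continuous_on (closure \<Omega>) c"
  obtains C where "\<And>x. x \<in> \<Omega> \<Longrightarrow> c x \<le> C"
proof -
  have "bounded (c ` closure \<Omega>)"
    using assms by (intro compact_imp_bounded compact_continuous_image) auto
  then obtain C where C: "\<forall>y\<in>c ` closure \<Omega>. norm y \<le> C" unfolding bounded_iff by blast
  show ?thesis
  proof (rule that)
    fix x assume "x \<in> \<Omega>"
    then have "norm (c x) \<le> C" using C closure_subset by blast
    then show "c x \<le> C" by simp
  qed
qed

lemma integrable_weighted_huber:
  fixes V :: "real^'n::finite \<Rightarrow> 'b::euclidean_space"
  assumes V: "L2_fun \<Omega> V" and cm: "c \<in> borel_measurable (lebesgue_on \<Omega>)" and cb: "\<forall>x\<in>\<Omega>. 0 \<le> c x \<and> c x \<le> C"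
    and g: "\<gamma> > 0"
  shows "integrable (lebesgue_on \<Omega>) (\<lambda>x. c x * huber \<gamma> (norm (V x)))"
    "integrable (lebesgue_on \<Omega>) (\<lambda>x. c x * (norm (V x))\<^sup>2 / (2 * \<gamma>))"
proof -
  have Vm: "V \<in> borel_measurable (lebesgue_on \<Omega>)" using L2_funD(1)[OF V] .
  have nV: "(\<lambda>x. norm (V x)) \<in> borel_measurable (lebesgue_on \<Omega>)" using measurable_compose[OF Vm borel_measurable_norm] .
  have B: "integrable (lebesgue_on \<Omega>) (\<lambda>x. C * (norm (V x))\<^sup>2 / (2 * \<gamma>))"
    using L2_funD(2)[OF V] by simp
  show "integrable (lebesgue_on \<Omega>) (\<lambda>x. c x * huber \<gamma> (norm (V x)))"
  proof (rule Bochner_Integration.integrable_bound[OF B])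
    show "(\<lambda>x. c x * huber \<gamma> (norm (V x))) \<in> borel_measurable (lebesgue_on \<Omega>)"
      using cm measurable_compose[OF nV borel_measurable_huber] by (rule borel_measurable_times)
    show "AE x in lebesgue_on \<Omega>. norm (c x * huber \<gamma> (norm (V x))) \<le> norm (C * (norm (V x))\<^sup>2 / (2 * \<gamma>))"
    proof (rule AE_I2)
      fix x assume "x \<in> space (lebesgue_on \<Omega>)"
      then have x: "x \<in> \<Omega>" by simp
      have h0: "0 \<le> huber \<gamma> (norm (V x))" by (rule huber_nonneg[OF g norm_ge_zero])
      have h1: "huber \<gamma> (norm (V x)) \<le> (norm (V x))\<^sup>2 / (2 * \<gamma>)" by (rule huber_le_square[OF g])
      have c: "0 \<le> c x" "c x \<le> C" using cb x by auto
      have "c x * huber \<gamma> (norm (V x)) \<le> C * ((norm (V x))\<^sup>2 / (2 * \<gamma>))"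
        by (rule mult_mono[OF c(2) h1]) (use c h0 in auto)
      moreover have "0 \<le> c x * huber \<gamma> (norm (V x))" using c h0 by simp
      moreover have "C * (norm (V x))\<^sup>2 / (2 * \<gamma>) \<le> norm (C * (norm (V x))\<^sup>2 / (2 * \<gamma>))"
        by (simp only: real_norm_def abs_ge_self)
      ultimately show "norm (c x * huber \<gamma> (norm (V x))) \<le> norm (C * (norm (V x))\<^sup>2 / (2 * \<gamma>))"
        by simp
    qed
  qed
  show "integrable (lebesgue_on \<Omega>) (\<lambda>x. c x * (norm (V x))\<^sup>2 / (2 * \<gamma>))"
  proof (rule Bochner_Integration.integrable_bound[OF B])
    show "(\<lambda>x. c x * (norm (V x))\<^sup>2 / (2 * \<gamma>)) \<in> borel_measurable (lebesgue_on \<Omega>)"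
      using cm nV by measurable
    show "AE x in lebesgue_on \<Omega>. norm (c x * (norm (V x))\<^sup>2 / (2 * \<gamma>)) \<le> norm (C * (norm (V x))\<^sup>2 / (2 * \<gamma>))"
    proof (rule AE_I2)
      fix x assume "x \<in> space (lebesgue_on \<Omega>)"
      then have x: "x \<in> \<Omega>" by simp
      have c: "0 \<le> c x" "c x \<le> C" using cb x by auto
      have "c x * (norm (V x))\<^sup>2 \<le> C * (norm (V x))\<^sup>2" by (rule mult_right_mono[OF c(2)]) simp
      then have "c x * (norm (V x))\<^sup>2 / (2 * \<gamma>) \<le> C * (norm (V x))\<^sup>2 / (2 * \<gamma>)"
        using g by (simp add: divide_right_mono)
      moreover have "0 \<le> c x * (norm (V x))\<^sup>2 / (2 * \<gamma>)" using c g by simp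
      moreover have "C * (norm (V x))\<^sup>2 / (2 * \<gamma>) \<le> norm (C * (norm (V x))\<^sup>2 / (2 * \<gamma>))"
        by (simp only: real_norm_def abs_ge_self)
      ultimately show "norm (c x * (norm (V x))\<^sup>2 / (2 * \<gamma>)) \<le> norm (C * (norm (V x))\<^sup>2 / (2 * \<gamma>))"
        by simp
    qed
  qed
qed

lemma power2_norm_add_scaleR:
  fixes G H :: "'a::real_inner"
  shows "(norm (G + t *\<^sub>R H))\<^sup>2 = (norm G)\<^sup>2 + 2 * t * (G \<bullet> H) + t\<^sup>2 * (norm H)\<^sup>2"
  by (simp only: power2_norm_eq_inner)
    (simp add: inner_add_left inner_add_right inner_commute power2_eq_square algebra_simps)

section \<open>The optimality system\<close>

locale huber_tgv_problem =
  fixes \<Omega> :: "(real^'n::finite) set"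
    and T :: "(real^'n \<Rightarrow> real) \<Rightarrow> (real^'n \<Rightarrow> real)"
    and f \<alpha>0 \<alpha>1 :: "real^'n \<Rightarrow> real"
    and \<mu> \<alpha> \<gamma>0 \<gamma>1 p0 :: real
  assumes \<Omega>: "open \<Omega>" "bounded \<Omega>"
    and p0: "0 \<le> p0" "p0 \<le> 2"
    and weights_continuous: "continuous_on (closure \<Omega>) \<alpha>0" "continuous_on (closure \<Omega>) \<alpha>1"
    and weights_nonneg: "\<And>x. x \<in> \<Omega> \<Longrightarrow> 0 \<le> \<alpha>0 x" "\<And>x. x \<in> \<Omega> \<Longrightarrow> 0 \<le> \<alpha>1 x"
    and T_maps: "\<And>v. Lp_fun \<Omega> p0 v \<Longrightarrow> L2_fun \<Omega> (T v)"
    and T_lin: "\<And>v v' c. Lp_fun \<Omega> p0 v \<Longrightarrow> Lp_fun \<Omega> p0 v' \<Longrightarrow>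
                 AE x in lebesgue_on \<Omega>. T (\<lambda>y. v y + c * v' y) x = T v x + c * T v' x"
    and f: "L2_fun \<Omega> f"
    and par: "0 \<le> \<mu>" "0 \<le> \<alpha>" "0 < \<gamma>0" "0 < \<gamma>1"
begin

abbreviation "M \<equiv> lebesgue_on \<Omega>"

lemma L2_T: "H1 \<Omega> v \<Longrightarrow> L2_fun \<Omega> (T v)"
  using T_maps Lp_fun_if_L2[OF \<Omega> p0 H1_wgrad(3)] by blast

lemma T_add_scaled:
  assumes "H1 \<Omega> v" "H1 \<Omega> v'"
  shows "AE x in M. T (\<lambda>y. v y + c * v' y) x = T v x + c * T v' x"
  using T_lin Lp_fun_if_L2[OF \<Omega> p0 H1_wgrad(3)[OF assms(1)]]
    Lp_fun_if_L2[OF \<Omega> p0 H1_wgrad(3)[OF assms(2)]] by blast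

lemma T_zero: "AE x in M. T (\<lambda>x. 0) x = 0"
proof -
  have L: "Lp_fun \<Omega> p0 (\<lambda>x::real^'n. 0::real)" by (rule Lp_fun_if_L2[OF \<Omega> p0 L2_fun_zero])
  have "AE x in M. T (\<lambda>x. 0) x = T (\<lambda>x. 0) x + T (\<lambda>x. 0) x"
    using T_lin[OF L L, of 1] by simp
  then show ?thesis by eventually_elim simp
qed

lemma weights_measurable: "\<alpha>0 \<in> borel_measurable M" "\<alpha>1 \<in> borel_measurable M"
  using borel_measurable_if_continuous_on_closure[OF \<Omega>(1)] weights_continuous by auto

lemma weights_bounded:
  obtains A where "\<And>x. x \<in> \<Omega> \<Longrightarrow> 0 \<le> \<alpha>0 x \<and> \<alpha>0 x \<le> A"
    "\<And>x. x \<in> \<Omega> \<Longrightarrow> 0 \<le> \<alpha>1 x \<and> \<alpha>1 x \<le> A"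
proof -
  obtain A0 where A0: "\<And>x. x \<in> \<Omega> \<Longrightarrow> \<alpha>0 x \<le> A0"
    using bounded_above_if_continuous_on_closure[OF \<Omega>(2) weights_continuous(1)] by blast
  obtain A1 where A1: "\<And>x. x \<in> \<Omega> \<Longrightarrow> \<alpha>1 x \<le> A1"
    using bounded_above_if_continuous_on_closure[OF \<Omega>(2) weights_continuous(2)] by blast
  show ?thesis
    by (rule that[of "max A0 A1"]) (use A0 A1 weights_nonneg in \<open>force+\<close>)
qed

text \<open>The integrand of \<open>Jfun\<close> as a function of \<open>(a, G, W, J) = (T u x, \<nabla>u x, w x, Dw x)\<close>, its
derivative in the direction \<open>(b, H, V, K)\<close> and the second-order remainder bound.\<close>
definition integrand :: "real^'n \<Rightarrow> real \<Rightarrow> real^'n \<Rightarrow> real^'n \<Rightarrow> real^'n^'n \<Rightarrow> real" where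
  "integrand x a G W J = (1/2) * (a - f x)\<^sup>2 + \<alpha>1 x * huber \<gamma>1 (norm (G - W))
     + \<alpha>0 x * huber \<gamma>0 (norm (symm J)) + (\<mu>/2) * (norm G)\<^sup>2 + (\<alpha>/2) * ((norm W)\<^sup>2 + (norm J)\<^sup>2)"

definition integrand_variation :: "real^'n \<Rightarrow> real \<Rightarrow> real^'n \<Rightarrow> real^'n \<Rightarrow> real^'n^'n
    \<Rightarrow> real \<Rightarrow> real^'n \<Rightarrow> real^'n \<Rightarrow> real^'n^'n \<Rightarrow> real" where
  "integrand_variation x a G W J b H V K = (a - f x) * b
     + \<alpha>1 x * (huber_grad \<gamma>1 (G - W) \<bullet> (H - V)) + \<alpha>0 x * (huber_grad \<gamma>0 (symm J) \<bullet> symm K)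
     + \<mu> * (G \<bullet> H) + \<alpha> * (W \<bullet> V + J \<bullet> K)"

definition integrand_curvature :: "real^'n \<Rightarrow> real \<Rightarrow> real^'n \<Rightarrow> real^'n \<Rightarrow> real^'n^'n \<Rightarrow> real" where
  "integrand_curvature x b H V K = b\<^sup>2 / 2 + \<alpha>1 x * (norm (H - V))\<^sup>2 / (2 * \<gamma>1)
     + \<alpha>0 x * (norm (symm K))\<^sup>2 / (2 * \<gamma>0) + (\<mu>/2) * (norm H)\<^sup>2 + (\<alpha>/2) * ((norm V)\<^sup>2 + (norm K)\<^sup>2)"

lemma integrand_add_scaled_le:
  assumes x: "x \<in> \<Omega>"
  shows "integrand x (a + t * b) (G + t *\<^sub>R H) (W + t *\<^sub>R V) (J + t *\<^sub>R K)
         \<le> integrand x a G W J + t * integrand_variation x a G W J b H V K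
           + t\<^sup>2 * integrand_curvature x b H V K"
proof -
  have e: "G + t *\<^sub>R H - (W + t *\<^sub>R V) = (G - W) + t *\<^sub>R (H - V)" by (simp add: algebra_simps)
  have h1: "huber \<gamma>1 (norm ((G - W) + t *\<^sub>R (H - V))) \<le> huber \<gamma>1 (norm (G - W))
      + t * (huber_grad \<gamma>1 (G - W) \<bullet> (H - V)) + t\<^sup>2 * ((norm (H - V))\<^sup>2 / (2 * \<gamma>1))"
    using huber_norm_add_le[OF par(4), of "G - W" "t *\<^sub>R (H - V)"] by (simp add: power_mult_distrib)
  have h0: "huber \<gamma>0 (norm (symm J + t *\<^sub>R symm K)) \<le> huber \<gamma>0 (norm (symm J))
      + t * (huber_grad \<gamma>0 (symm J) \<bullet> symm K) + t\<^sup>2 * ((norm (symm K))\<^sup>2 / (2 * \<gamma>0))"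
    using huber_norm_add_le[OF par(3), of "symm J" "t *\<^sub>R symm K"] by (simp add: power_mult_distrib)
  have h1': "\<alpha>1 x * huber \<gamma>1 (norm ((G - W) + t *\<^sub>R (H - V))) \<le> \<alpha>1 x * huber \<gamma>1 (norm (G - W))
      + t * (\<alpha>1 x * (huber_grad \<gamma>1 (G - W) \<bullet> (H - V))) + t\<^sup>2 * (\<alpha>1 x * (norm (H - V))\<^sup>2 / (2 * \<gamma>1))"
    using mult_left_mono[OF h1 weights_nonneg(2)[OF x]] by (simp add: algebra_simps)
  have h0': "\<alpha>0 x * huber \<gamma>0 (norm (symm J + t *\<^sub>R symm K)) \<le> \<alpha>0 x * huber \<gamma>0 (norm (symm J))
      + t * (\<alpha>0 x * (huber_grad \<gamma>0 (symm J) \<bullet> symm K)) + t\<^sup>2 * (\<alpha>0 x * (norm (symm K))\<^sup>2 / (2 * \<gamma>0))"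
    using mult_left_mono[OF h0 weights_nonneg(1)[OF x]] by (simp add: algebra_simps)
  have q: "(a + t * b - f x)\<^sup>2 = (a - f x)\<^sup>2 + 2 * t * ((a - f x) * b) + t\<^sup>2 * b\<^sup>2"
    by (simp add: power2_eq_square algebra_simps)
  show ?thesis
    unfolding integrand_def integrand_variation_def integrand_curvature_def e symm_add_scaleR
      power2_norm_add_scaleR q
    using h1' h0' by (simp add: algebra_simps)
qed

lemma integrand_add_scaled_ge:
  assumes x: "x \<in> \<Omega>"
  shows "integrand x a G W J + t * integrand_variation x a G W J b H V K
         \<le> integrand x (a + t * b) (G + t *\<^sub>R H) (W + t *\<^sub>R V) (J + t *\<^sub>R K)"
proof -
  have e: "G + t *\<^sub>R H - (W + t *\<^sub>R V) = (G - W) + t *\<^sub>R (H - V)" by (simp add: algebra_simps)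
  have h1: "huber \<gamma>1 (norm ((G - W) + t *\<^sub>R (H - V)))
      \<ge> huber \<gamma>1 (norm (G - W)) + t * (huber_grad \<gamma>1 (G - W) \<bullet> (H - V))"
    using huber_norm_add_ge[OF par(4), of "G - W" "t *\<^sub>R (H - V)"] by simp
  have h0: "huber \<gamma>0 (norm (symm J + t *\<^sub>R symm K))
      \<ge> huber \<gamma>0 (norm (symm J)) + t * (huber_grad \<gamma>0 (symm J) \<bullet> symm K)"
    using huber_norm_add_ge[OF par(3), of "symm J" "t *\<^sub>R symm K"] by simp
  have h1': "\<alpha>1 x * huber \<gamma>1 (norm ((G - W) + t *\<^sub>R (H - V)))
      \<ge> \<alpha>1 x * huber \<gamma>1 (norm (G - W)) + t * (\<alpha>1 x * (huber_grad \<gamma>1 (G - W) \<bullet> (H - V)))"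
    using mult_left_mono[OF h1 weights_nonneg(2)[OF x]] by (simp add: algebra_simps)
  have h0': "\<alpha>0 x * huber \<gamma>0 (norm (symm J + t *\<^sub>R symm K))
      \<ge> \<alpha>0 x * huber \<gamma>0 (norm (symm J)) + t * (\<alpha>0 x * (huber_grad \<gamma>0 (symm J) \<bullet> symm K))"
    using mult_left_mono[OF h0 weights_nonneg(1)[OF x]] by (simp add: algebra_simps)
  have q: "(a + t * b - f x)\<^sup>2 = (a - f x)\<^sup>2 + 2 * t * ((a - f x) * b) + t\<^sup>2 * b\<^sup>2"
    by (simp add: power2_eq_square algebra_simps)
  have pos: "0 \<le> t\<^sup>2 * b\<^sup>2" "0 \<le> \<mu> * (t\<^sup>2 * (norm H)\<^sup>2)" "0 \<le> \<alpha> * (t\<^sup>2 * (norm V)\<^sup>2)"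
    "0 \<le> \<alpha> * (t\<^sup>2 * (norm K)\<^sup>2)"
    using par by auto
  have b: "0 \<le> b\<^sup>2 * t\<^sup>2" by simp
  show ?thesis
    unfolding integrand_def integrand_variation_def e symm_add_scaleR power2_norm_add_scaleR q
    using h1' h0' pos by (simp add: algebra_simps) (use b in linarith)
qed

lemma integrable_integrand:
  assumes "L2_fun \<Omega> a" "L2_fun \<Omega> G" "L2_fun \<Omega> W" "L2_fun \<Omega> J"
  shows "integrable M (\<lambda>x. integrand x (a x) (G x) (W x) (J x))"
proof -
  obtain A where A: "\<And>x. x \<in> \<Omega> \<Longrightarrow> 0 \<le> \<alpha>0 x \<and> \<alpha>0 x \<le> A"
    "\<And>x. x \<in> \<Omega> \<Longrightarrow> 0 \<le> \<alpha>1 x \<and> \<alpha>1 x \<le> A"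
    by (rule weights_bounded) blast
  have "integrable M (\<lambda>x. (a x - f x)\<^sup>2)"
    using L2_funD(2)[OF L2_fun_diff[OF assms(1) f]] by simp
  moreover have "integrable M (\<lambda>x. \<alpha>1 x * huber \<gamma>1 (norm (G x - W x)))"
    by (rule integrable_weighted_huber(1)[OF L2_fun_diff[OF assms(2,3)] weights_measurable(2)])
      (use A par in auto)
  moreover have "integrable M (\<lambda>x. \<alpha>0 x * huber \<gamma>0 (norm (symm (J x))))"
    by (rule integrable_weighted_huber(1)[OF L2_fun_symm[OF assms(4)] weights_measurable(1)])
      (use A par in auto)
  ultimately show ?thesis unfolding integrand_def
    by (intro Bochner_Integration.integrable_add integrable_mult_right L2_funD(2) assms)
qed

lemma integrable_integrand_curvature:
  assumes "L2_fun \<Omega> b" "L2_fun \<Omega> H" "L2_fun \<Omega> V" "L2_fun \<Omega> K"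
  shows "integrable M (\<lambda>x. integrand_curvature x (b x) (H x) (V x) (K x))"
proof -
  obtain A where A: "\<And>x. x \<in> \<Omega> \<Longrightarrow> 0 \<le> \<alpha>0 x \<and> \<alpha>0 x \<le> A"
    "\<And>x. x \<in> \<Omega> \<Longrightarrow> 0 \<le> \<alpha>1 x \<and> \<alpha>1 x \<le> A"
    by (rule weights_bounded) blast
  have "integrable M (\<lambda>x. (b x)\<^sup>2 / 2)" using L2_funD(2)[OF assms(1)] by simp
  moreover have "integrable M (\<lambda>x. \<alpha>1 x * (norm (H x - V x))\<^sup>2 / (2 * \<gamma>1))"
    by (rule integrable_weighted_huber(2)[OF L2_fun_diff[OF assms(2,3)] weights_measurable(2)])
      (use A par in auto)
  moreover have "integrable M (\<lambda>x. \<alpha>0 x * (norm (symm (K x)))\<^sup>2 / (2 * \<gamma>0))"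
    by (rule integrable_weighted_huber(2)[OF L2_fun_symm[OF assms(4)] weights_measurable(1)])
      (use A par in auto)
  ultimately show ?thesis unfolding integrand_curvature_def
    by (intro Bochner_Integration.integrable_add integrable_mult_right L2_funD(2) assms)
qed

lemma integrable_integrand_H1:
  assumes "H1 \<Omega> u" "H1v \<Omega> w"
  shows "integrable M (\<lambda>x. integrand x (T u x) (wgrad \<Omega> u x) (w x) (wjac \<Omega> w x))"
  using assms by (intro integrable_integrand L2_T H1_wgrad(1) H1v_L2)

lemma Jfun_eq_integral:
  assumes u: "H1 \<Omega> u" and w: "H1v \<Omega> w"
  shows "Jfun \<Omega> T f \<alpha>0 \<alpha>1 \<gamma>0 \<gamma>1 \<mu> \<alpha> u w
       = (\<integral>x. integrand x (T u x) (wgrad \<Omega> u x) (w x) (wjac \<Omega> w x) \<partial>M)"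
proof -
  obtain A where A: "\<And>x. x \<in> \<Omega> \<Longrightarrow> 0 \<le> \<alpha>0 x \<and> \<alpha>0 x \<le> A"
    "\<And>x. x \<in> \<Omega> \<Longrightarrow> 0 \<le> \<alpha>1 x \<and> \<alpha>1 x \<le> A"
    by (rule weights_bounded) blast
  note Gu = H1_wgrad(1)[OF u] and Wp = H1v_L2[OF w]
  have "integrable M (\<lambda>x. (T u x - f x)\<^sup>2)"
    using L2_funD(2)[OF L2_fun_diff[OF L2_T[OF u] f]] by simp
  moreover have "integrable M (\<lambda>x. \<alpha>1 x * huber \<gamma>1 (norm (wgrad \<Omega> u x - w x)))"
    by (rule integrable_weighted_huber(1)[OF L2_fun_diff[OF Gu Wp(1)] weights_measurable(2)])
      (use A par in auto)
  moreover have "integrable M (\<lambda>x. \<alpha>0 x * huber \<gamma>0 (norm (symm (wjac \<Omega> w x))))"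
    by (rule integrable_weighted_huber(1)[OF L2_fun_symm[OF Wp(2)] weights_measurable(1)])
      (use A par in auto)
  ultimately show ?thesis
    using L2_funD(2)[OF Gu] L2_funD(2)[OF Wp(1)] L2_funD(2)[OF Wp(2)]
    unfolding Jfun_def integrand_def symgrad_eq_symm
    by (simp add: Bochner_Integration.integral_add Bochner_Integration.integrable_add)
qed

lemma integrand_add_scaled_AE:
  assumes u: "H1 \<Omega> u" and w: "H1v \<Omega> w" and v: "H1 \<Omega> v" and \<omega>: "H1v \<Omega> \<omega>"
  shows "AE x in M.
    integrand x (T (\<lambda>y. u y + t * v y) x) (wgrad \<Omega> (\<lambda>y. u y + t * v y) x) (w x + t *\<^sub>R \<omega> x)
      (wjac \<Omega> (\<lambda>y. w y + t *\<^sub>R \<omega> y) x)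
    = integrand x (T u x + t * T v x) (wgrad \<Omega> u x + t *\<^sub>R wgrad \<Omega> v x) (w x + t *\<^sub>R \<omega> x)
      (wjac \<Omega> w x + t *\<^sub>R wjac \<Omega> \<omega> x)"
  using T_add_scaled[OF u v, of t] H1_add_scaled(2)[OF \<Omega> u v, of t]
    H1v_add_scaled(2)[OF \<Omega> w \<omega>, of t]
  by eventually_elim simp


text \<open>The multipliers determined by (3) and (4).\<close>
definition multiplier_q :: "(real^'n \<Rightarrow> real) \<Rightarrow> (real^'n \<Rightarrow> real^'n) \<Rightarrow> real^'n \<Rightarrow> real^'n" where
  "multiplier_q u w x = \<alpha>1 x *\<^sub>R huber_grad \<gamma>1 (wgrad \<Omega> u x - w x)"

definition multiplier_p :: "(real^'n \<Rightarrow> real^'n) \<Rightarrow> real^'n \<Rightarrow> real^'n^'n" where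
  "multiplier_p w x = \<alpha>0 x *\<^sub>R huber_grad \<gamma>0 (symgrad \<Omega> w x)"

lemma L2_multipliers:
  assumes u: "H1 \<Omega> u" and w: "H1v \<Omega> w"
  shows "L2_fun \<Omega> (multiplier_q u w)" "L2_fun \<Omega> (multiplier_p w)"
proof -
  obtain A where A: "\<And>x. x \<in> \<Omega> \<Longrightarrow> 0 \<le> \<alpha>0 x \<and> \<alpha>0 x \<le> A"
    "\<And>x. x \<in> \<Omega> \<Longrightarrow> 0 \<le> \<alpha>1 x \<and> \<alpha>1 x \<le> A"
    by (rule weights_bounded) blast
  have "norm (c *\<^sub>R huber_grad \<gamma> a) \<le> A" if "0 \<le> c" "c \<le> A" "\<gamma> > 0" for c \<gamma> and a :: "'a::real_inner"
  proof -
    have "norm (c *\<^sub>R huber_grad \<gamma> a) = c * norm (huber_grad \<gamma> a)" using that by simp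
    also have "\<dots> \<le> c * 1" using that by (intro mult_left_mono norm_huber_grad_le) auto
    finally show ?thesis using that by simp
  qed
  then have bounds: "norm (multiplier_q u w x) \<le> A" "norm (multiplier_p w x) \<le> A" if "x \<in> \<Omega>" for x
    unfolding multiplier_q_def multiplier_p_def using A[OF that] par by auto
  have "(\<lambda>x. wgrad \<Omega> u x - w x) \<in> borel_measurable M"
    using L2_funD(1)[OF L2_fun_diff[OF H1_wgrad(1)[OF u] H1v_L2(1)[OF w]]] .
  then have "multiplier_q u w \<in> borel_measurable M"
    unfolding multiplier_q_def[abs_def]
    by (intro borel_measurable_scaleR weights_measurable borel_measurable_huber_grad)
  then show "L2_fun \<Omega> (multiplier_q u w)" using bounds(1) by (rule L2_fun_if_bounded[OF \<Omega>])
  have "multiplier_p w \<in> borel_measurable M"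
    unfolding multiplier_p_def[abs_def]
    by (intro borel_measurable_scaleR weights_measurable borel_measurable_huber_grad
        L2_funD(1)[OF H1v_L2(3)[OF w]])
  then show "L2_fun \<Omega> (multiplier_p w)" using bounds(2) by (rule L2_fun_if_bounded[OF \<Omega>])
qed

lemma multiplier_p_symmetric: "transpose (multiplier_p w x) = multiplier_p w x"
  by (simp add: multiplier_p_def huber_grad_def transpose_scalar symgrad_symmetric)

text \<open>The left-hand sides of (1) and (2), tested with \<open>v\<close> and \<open>\<omega>\<close>.\<close>
definition residual_u :: "(real^'n \<Rightarrow> real) \<Rightarrow> (real^'n \<Rightarrow> real^'n) \<Rightarrow> (real^'n \<Rightarrow> real) \<Rightarrow> real" where
  "residual_u u q v = (\<integral>x. T u x * T v x \<partial>M) + \<mu> * (\<integral>x. wgrad \<Omega> u x \<bullet> wgrad \<Omega> v x \<partial>M)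
     + (\<integral>x. q x \<bullet> wgrad \<Omega> v x \<partial>M) - (\<integral>x. f x * T v x \<partial>M)"

definition residual_w :: "(real^'n \<Rightarrow> real^'n) \<Rightarrow> (real^'n \<Rightarrow> real^'n) \<Rightarrow> (real^'n \<Rightarrow> real^'n^'n)
    \<Rightarrow> (real^'n \<Rightarrow> real^'n) \<Rightarrow> real" where
  "residual_w w q p \<omega> = \<alpha> * (\<integral>x. w x \<bullet> \<omega> x + wjac \<Omega> w x \<bullet> wjac \<Omega> \<omega> x \<partial>M)
     - (\<integral>x. q x \<bullet> \<omega> x \<partial>M) + (\<integral>x. p x \<bullet> symgrad \<Omega> \<omega> x \<partial>M)"

definition variation_density :: "(real^'n \<Rightarrow> real) \<Rightarrow> (real^'n \<Rightarrow> real^'n) \<Rightarrow> (real^'n \<Rightarrow> real)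
    \<Rightarrow> (real^'n \<Rightarrow> real^'n) \<Rightarrow> (real^'n \<Rightarrow> real^'n) \<Rightarrow> (real^'n \<Rightarrow> real^'n^'n) \<Rightarrow> real^'n \<Rightarrow> real" where
  "variation_density u w v \<omega> q p x = (T u x - f x) * T v x + q x \<bullet> (wgrad \<Omega> v x - \<omega> x)
     + p x \<bullet> symgrad \<Omega> \<omega> x + \<mu> * (wgrad \<Omega> u x \<bullet> wgrad \<Omega> v x)
     + \<alpha> * (w x \<bullet> \<omega> x + wjac \<Omega> w x \<bullet> wjac \<Omega> \<omega> x)"

lemma integrand_variation_eq_variation_density:
  "integrand_variation x (T u x) (wgrad \<Omega> u x) (w x) (wjac \<Omega> w x) (T v x) (wgrad \<Omega> v x) (\<omega> x)
     (wjac \<Omega> \<omega> x) = variation_density u w v \<omega> (multiplier_q u w) (multiplier_p w) x"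
  by (simp add: integrand_variation_def variation_density_def multiplier_q_def multiplier_p_def
      symgrad_eq_symm)

lemma variation_density_integral:
  assumes q: "L2_fun \<Omega> q" and p: "L2_fun \<Omega> p" and u: "H1 \<Omega> u" and w: "H1v \<Omega> w"
    and v: "H1 \<Omega> v" and \<omega>: "H1v \<Omega> \<omega>"
  shows "integrable M (variation_density u w v \<omega> q p)"
    "(\<integral>x. variation_density u w v \<omega> q p x \<partial>M) = residual_u u q v + residual_w w q p \<omega>"
proof -
  note Tu = L2_T[OF u] and Tv = L2_T[OF v] and Gu = H1_wgrad(1)[OF u] and Gv = H1_wgrad(1)[OF v]
    and Wp = H1v_L2[OF w] and Op = H1v_L2[OF \<omega>]
  have i: "integrable M (\<lambda>x. T u x * T v x)" "integrable M (\<lambda>x. f x * T v x)"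
    "integrable M (\<lambda>x. q x \<bullet> wgrad \<Omega> v x)" "integrable M (\<lambda>x. q x \<bullet> \<omega> x)"
    "integrable M (\<lambda>x. p x \<bullet> symgrad \<Omega> \<omega> x)" "integrable M (\<lambda>x. wgrad \<Omega> u x \<bullet> wgrad \<Omega> v x)"
    "integrable M (\<lambda>x. w x \<bullet> \<omega> x + wjac \<Omega> w x \<bullet> wjac \<Omega> \<omega> x)"
    by (intro integrable_mult_L2 integrable_inner_L2 Bochner_Integration.integrable_add
        Tu Tv Gu Gv Wp Op q p f)+
  have e: "variation_density u w v \<omega> q p = (\<lambda>x. T u x * T v x - f x * T v x
       + q x \<bullet> wgrad \<Omega> v x - q x \<bullet> \<omega> x + p x \<bullet> symgrad \<Omega> \<omega> x
       + \<mu> * (wgrad \<Omega> u x \<bullet> wgrad \<Omega> v x) + \<alpha> * (w x \<bullet> \<omega> x + wjac \<Omega> w x \<bullet> wjac \<Omega> \<omega> x))"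
    by (rule ext) (simp add: variation_density_def inner_diff_right algebra_simps)
  show "integrable M (variation_density u w v \<omega> q p)" unfolding e
    by (intro Bochner_Integration.integrable_add Bochner_Integration.integrable_diff
        integrable_mult_right i)
  show "(\<integral>x. variation_density u w v \<omega> q p x \<partial>M) = residual_u u q v + residual_w w q p \<omega>"
    unfolding e residual_u_def residual_w_def using i
    by (simp add: Bochner_Integration.integral_add Bochner_Integration.integrable_add
        Bochner_Integration.integral_diff Bochner_Integration.integrable_diff)
qed

lemma residual_u_zero: "residual_u u q (\<lambda>x. 0) = 0"
proof -
  have T0: "AE x in M. T (\<lambda>x. 0) x = 0" by (rule T_zero)
  have G0: "AE x in M. wgrad \<Omega> (\<lambda>x. 0) x = 0" by (rule H1_zero(2)[OF \<Omega>])
  have "(\<integral>x. T u x * T (\<lambda>x. 0) x \<partial>M) = 0" "(\<integral>x. f x * T (\<lambda>x. 0) x \<partial>M) = 0"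
    using T0 by (auto intro!: integral_eq_zero_AE elim!: eventually_mono)
  moreover have "(\<integral>x. wgrad \<Omega> u x \<bullet> wgrad \<Omega> (\<lambda>x. 0) x \<partial>M) = 0"
    "(\<integral>x. q x \<bullet> wgrad \<Omega> (\<lambda>x. 0) x \<partial>M) = 0"
    using G0 by (auto intro!: integral_eq_zero_AE elim!: eventually_mono)
  ultimately show ?thesis unfolding residual_u_def by simp
qed

lemma residual_w_zero: "residual_w w q p (\<lambda>x. 0) = 0"
proof -
  have "(\<integral>x. w x \<bullet> (0::real^'n) + wjac \<Omega> w x \<bullet> wjac \<Omega> (\<lambda>x. 0) x \<partial>M) = 0"
    using H1v_zero(2)[OF \<Omega>] by (auto intro!: integral_eq_zero_AE elim!: eventually_mono)
  moreover have "(\<integral>x. p x \<bullet> symgrad \<Omega> (\<lambda>x. 0 :: real^'n) x \<partial>M) = 0"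
    using H1v_zero(3)[OF \<Omega>] by (auto intro!: integral_eq_zero_AE elim!: eventually_mono)
  ultimately show ?thesis unfolding residual_w_def by simp
qed

lemma Jfun_add_scaled_le:
  assumes u: "H1 \<Omega> u" and w: "H1v \<Omega> w" and v: "H1 \<Omega> v" and \<omega>: "H1v \<Omega> \<omega>"
  shows "Jfun \<Omega> T f \<alpha>0 \<alpha>1 \<gamma>0 \<gamma>1 \<mu> \<alpha> (\<lambda>x. u x + t * v x) (\<lambda>x. w x + t *\<^sub>R \<omega> x)
    \<le> Jfun \<Omega> T f \<alpha>0 \<alpha>1 \<gamma>0 \<gamma>1 \<mu> \<alpha> u w
      + t * (\<integral>x. variation_density u w v \<omega> (multiplier_q u w) (multiplier_p w) x \<partial>M)
      + t\<^sup>2 * (\<integral>x. integrand_curvature x (T v x) (wgrad \<Omega> v x) (\<omega> x) (wjac \<Omega> \<omega> x) \<partial>M)"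
    (is "Jfun _ _ _ _ _ _ _ _ _ ?ut ?wt \<le> _ + t * integral\<^sup>L M ?L + t\<^sup>2 * integral\<^sup>L M ?K")
proof -
  have ut: "H1 \<Omega> ?ut" by (rule H1_add_scaled(1)[OF \<Omega> u v])
  have wt: "H1v \<Omega> ?wt" by (rule H1v_add_scaled(1)[OF \<Omega> w \<omega>])
  let ?J = "\<lambda>x. integrand x (T u x) (wgrad \<Omega> u x) (w x) (wjac \<Omega> w x)"
  have I0: "integrable M ?J" by (rule integrable_integrand_H1[OF u w])
  have IL: "integrable M ?L"
    by (rule variation_density_integral(1)[OF L2_multipliers[OF u w] u w v \<omega>])
  have IK: "integrable M ?K"
    by (intro integrable_integrand_curvature L2_T H1_wgrad(1) H1v_L2 v \<omega>)
  have "Jfun \<Omega> T f \<alpha>0 \<alpha>1 \<gamma>0 \<gamma>1 \<mu> \<alpha> ?ut ?wt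
      = (\<integral>x. integrand x (T ?ut x) (wgrad \<Omega> ?ut x) (?wt x) (wjac \<Omega> ?wt x) \<partial>M)"
    by (rule Jfun_eq_integral[OF ut wt])
  also have "\<dots> \<le> (\<integral>x. ?J x + t * ?L x + t\<^sup>2 * ?K x \<partial>M)"
  proof (rule integral_mono_AE)
    show "integrable M (\<lambda>x. integrand x (T ?ut x) (wgrad \<Omega> ?ut x) (?wt x) (wjac \<Omega> ?wt x))"
      by (rule integrable_integrand_H1[OF ut wt])
    show "integrable M (\<lambda>x. ?J x + t * ?L x + t\<^sup>2 * ?K x)"
      by (intro Bochner_Integration.integrable_add integrable_mult_right I0 IL IK)
    have "AE x in M. x \<in> \<Omega>" by (rule AE_I2) simp
    then show "AE x in M. integrand x (T ?ut x) (wgrad \<Omega> ?ut x) (?wt x) (wjac \<Omega> ?wt x)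
        \<le> ?J x + t * ?L x + t\<^sup>2 * ?K x"
      using integrand_add_scaled_AE[OF u w v \<omega>, of t]
      by eventually_elim
        (simp add: integrand_add_scaled_le integrand_variation_eq_variation_density[symmetric])
  qed
  also have "\<dots> = Jfun \<Omega> T f \<alpha>0 \<alpha>1 \<gamma>0 \<gamma>1 \<mu> \<alpha> u w + t * integral\<^sup>L M ?L + t\<^sup>2 * integral\<^sup>L M ?K"
    unfolding Jfun_eq_integral[OF u w] using I0 IL IK
    by (simp add: Bochner_Integration.integral_add Bochner_Integration.integrable_add)
  finally show ?thesis .
qed

lemma Jfun_add_scaled_ge:
  assumes u: "H1 \<Omega> u" and w: "H1v \<Omega> w" and v: "H1 \<Omega> v" and \<omega>: "H1v \<Omega> \<omega>"
  shows "Jfun \<Omega> T f \<alpha>0 \<alpha>1 \<gamma>0 \<gamma>1 \<mu> \<alpha> u w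
      + t * (\<integral>x. variation_density u w v \<omega> (multiplier_q u w) (multiplier_p w) x \<partial>M)
    \<le> Jfun \<Omega> T f \<alpha>0 \<alpha>1 \<gamma>0 \<gamma>1 \<mu> \<alpha> (\<lambda>x. u x + t * v x) (\<lambda>x. w x + t *\<^sub>R \<omega> x)"
    (is "_ + t * integral\<^sup>L M ?L \<le> Jfun _ _ _ _ _ _ _ _ _ ?ut ?wt")
proof -
  have ut: "H1 \<Omega> ?ut" by (rule H1_add_scaled(1)[OF \<Omega> u v])
  have wt: "H1v \<Omega> ?wt" by (rule H1v_add_scaled(1)[OF \<Omega> w \<omega>])
  let ?J = "\<lambda>x. integrand x (T u x) (wgrad \<Omega> u x) (w x) (wjac \<Omega> w x)"
  have I0: "integrable M ?J" by (rule integrable_integrand_H1[OF u w])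
  have IL: "integrable M ?L"
    by (rule variation_density_integral(1)[OF L2_multipliers[OF u w] u w v \<omega>])
  have "Jfun \<Omega> T f \<alpha>0 \<alpha>1 \<gamma>0 \<gamma>1 \<mu> \<alpha> u w + t * integral\<^sup>L M ?L = (\<integral>x. ?J x + t * ?L x \<partial>M)"
    unfolding Jfun_eq_integral[OF u w] using I0 IL by simp
  also have "\<dots> \<le> (\<integral>x. integrand x (T ?ut x) (wgrad \<Omega> ?ut x) (?wt x) (wjac \<Omega> ?wt x) \<partial>M)"
  proof (rule integral_mono_AE)
    show "integrable M (\<lambda>x. ?J x + t * ?L x)"
      by (intro Bochner_Integration.integrable_add integrable_mult_right I0 IL)
    show "integrable M (\<lambda>x. integrand x (T ?ut x) (wgrad \<Omega> ?ut x) (?wt x) (wjac \<Omega> ?wt x))"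
      by (rule integrable_integrand_H1[OF ut wt])
    have "AE x in M. x \<in> \<Omega>" by (rule AE_I2) simp
    then show "AE x in M. ?J x + t * ?L x
        \<le> integrand x (T ?ut x) (wgrad \<Omega> ?ut x) (?wt x) (wjac \<Omega> ?wt x)"
      using integrand_add_scaled_AE[OF u w v \<omega>, of t]
      by eventually_elim
        (simp add: integrand_add_scaled_ge integrand_variation_eq_variation_density[symmetric])
  qed
  also have "\<dots> = Jfun \<Omega> T f \<alpha>0 \<alpha>1 \<gamma>0 \<gamma>1 \<mu> \<alpha> ?ut ?wt"
    by (rule Jfun_eq_integral[OF ut wt, symmetric])
  finally show ?thesis .
qed

definition minimizer :: "(real^'n \<Rightarrow> real) \<Rightarrow> (real^'n \<Rightarrow> real^'n) \<Rightarrow> bool" where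
  "minimizer u w \<longleftrightarrow> (\<forall>u' w'. H1 \<Omega> u' \<longrightarrow> H1v \<Omega> w' \<longrightarrow>
     Jfun \<Omega> T f \<alpha>0 \<alpha>1 \<gamma>0 \<gamma>1 \<mu> \<alpha> u w \<le> Jfun \<Omega> T f \<alpha>0 \<alpha>1 \<gamma>0 \<gamma>1 \<mu> \<alpha> u' w')"

definition optimality_system :: "(real^'n \<Rightarrow> real) \<Rightarrow> (real^'n \<Rightarrow> real^'n)
    \<Rightarrow> (real^'n \<Rightarrow> real^'n^'n) \<Rightarrow> (real^'n \<Rightarrow> real^'n) \<Rightarrow> bool" where
  "optimality_system u w p q \<longleftrightarrow>
     L2_fun \<Omega> p \<and> (AE x in M. transpose (p x) = p x) \<and> L2_fun \<Omega> q \<and>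
     (\<forall>v. H1 \<Omega> v \<longrightarrow> residual_u u q v = 0) \<and>
     (\<forall>\<omega>. H1v \<Omega> \<omega> \<longrightarrow> residual_w w q p \<omega> = 0) \<and>
     (AE x in M. max (norm (wgrad \<Omega> u x - w x)) \<gamma>1 *\<^sub>R q x - \<alpha>1 x *\<^sub>R (wgrad \<Omega> u x - w x) = 0) \<and>
     (AE x in M. max (norm (symgrad \<Omega> w x)) \<gamma>0 *\<^sub>R p x - \<alpha>0 x *\<^sub>R symgrad \<Omega> w x = 0)"

lemma minimizer_imp_variation_zero:
  assumes min: "minimizer u w" and u: "H1 \<Omega> u" and w: "H1v \<Omega> w"
    and v: "H1 \<Omega> v" and \<omega>: "H1v \<Omega> \<omega>"
  shows "residual_u u (multiplier_q u w) v + residual_w w (multiplier_q u w) (multiplier_p w) \<omega> = 0"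
proof -
  define L where "L = (\<integral>x. variation_density u w v \<omega> (multiplier_q u w) (multiplier_p w) x \<partial>M)"
  define K where "K = (\<integral>x. integrand_curvature x (T v x) (wgrad \<Omega> v x) (\<omega> x) (wjac \<Omega> \<omega> x) \<partial>M)"
  have "0 \<le> t * L + t\<^sup>2 * K" for t
  proof -
    have "Jfun \<Omega> T f \<alpha>0 \<alpha>1 \<gamma>0 \<gamma>1 \<mu> \<alpha> u w
        \<le> Jfun \<Omega> T f \<alpha>0 \<alpha>1 \<gamma>0 \<gamma>1 \<mu> \<alpha> (\<lambda>x. u x + t * v x) (\<lambda>x. w x + t *\<^sub>R \<omega> x)"
      using min H1_add_scaled(1)[OF \<Omega> u v] H1v_add_scaled(1)[OF \<Omega> w \<omega>]
      unfolding minimizer_def by blast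
    also have "\<dots> \<le> Jfun \<Omega> T f \<alpha>0 \<alpha>1 \<gamma>0 \<gamma>1 \<mu> \<alpha> u w + t * L + t\<^sup>2 * K"
      unfolding L_def K_def by (rule Jfun_add_scaled_le[OF u w v \<omega>])
    finally show ?thesis by simp
  qed
  then have "L = 0" by (rule eq_0_if_linear_plus_quadratic_nonneg)
  then show ?thesis
    unfolding L_def using variation_density_integral(2)[OF L2_multipliers[OF u w] u w v \<omega>] by simp
qed

lemma minimizer_imp_optimality_system:
  assumes min: "minimizer u w" and u: "H1 \<Omega> u" and w: "H1v \<Omega> w"
  shows "optimality_system u w (multiplier_p w) (multiplier_q u w)"
  unfolding optimality_system_def
proof (intro conjI allI impI)
  show "L2_fun \<Omega> (multiplier_p w)" "L2_fun \<Omega> (multiplier_q u w)"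
    using L2_multipliers[OF u w] by auto
  show "AE x in M. transpose (multiplier_p w x) = multiplier_p w x"
    by (simp add: multiplier_p_symmetric)
  show "residual_u u (multiplier_q u w) v = 0" if "H1 \<Omega> v" for v
    using minimizer_imp_variation_zero[OF min u w that H1v_zero(1)[OF \<Omega>]] residual_w_zero by simp
  show "residual_w w (multiplier_q u w) (multiplier_p w) \<omega> = 0" if "H1v \<Omega> \<omega>" for \<omega>
    using minimizer_imp_variation_zero[OF min u w H1_zero(1)[OF \<Omega>] that] residual_u_zero by simp
  show "AE x in M. max (norm (wgrad \<Omega> u x - w x)) \<gamma>1 *\<^sub>R multiplier_q u w x
      - \<alpha>1 x *\<^sub>R (wgrad \<Omega> u x - w x) = 0"
    unfolding scaleR_max_eq_iff_huber_grad[OF par(4)] multiplier_q_def by simp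
  show "AE x in M. max (norm (symgrad \<Omega> w x)) \<gamma>0 *\<^sub>R multiplier_p w x
      - \<alpha>0 x *\<^sub>R symgrad \<Omega> w x = 0"
    unfolding scaleR_max_eq_iff_huber_grad[OF par(3)] multiplier_p_def by simp
qed

lemma optimality_system_imp_minimizer:
  assumes u: "H1 \<Omega> u" and w: "H1v \<Omega> w" and sys: "optimality_system u w p q"
  shows "minimizer u w"
  unfolding minimizer_def
proof (intro allI impI)
  fix u' w' assume u': "H1 \<Omega> u'" and w': "H1v \<Omega> w'"
  define v where "v = (\<lambda>x. u' x + (-1) * u x)"
  define \<omega> where "\<omega> = (\<lambda>x. w' x + (-1) *\<^sub>R w x)"
  have v: "H1 \<Omega> v" unfolding v_def by (rule H1_add_scaled(1)[OF \<Omega> u' u])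
  have \<omega>: "H1v \<Omega> \<omega>" unfolding \<omega>_def by (rule H1v_add_scaled(1)[OF \<Omega> w' w])
  have p: "L2_fun \<Omega> p" and q: "L2_fun \<Omega> q"
    using sys unfolding optimality_system_def by auto
  have qe: "AE x in M. q x = multiplier_q u w x" and pe: "AE x in M. p x = multiplier_p w x"
    using sys unfolding optimality_system_def scaleR_max_eq_iff_huber_grad[OF par(4)]
      scaleR_max_eq_iff_huber_grad[OF par(3)] multiplier_q_def multiplier_p_def by blast+
  have "(\<integral>x. variation_density u w v \<omega> (multiplier_q u w) (multiplier_p w) x \<partial>M)
      = (\<integral>x. variation_density u w v \<omega> q p x \<partial>M)"
  proof (rule integral_cong_AE)
    show "variation_density u w v \<omega> (multiplier_q u w) (multiplier_p w) \<in> borel_measurable M"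
      by (rule borel_measurable_integrable[OF
            variation_density_integral(1)[OF L2_multipliers[OF u w] u w v \<omega>]])
    show "variation_density u w v \<omega> q p \<in> borel_measurable M"
      by (rule borel_measurable_integrable[OF variation_density_integral(1)[OF q p u w v \<omega>]])
    show "AE x in M. variation_density u w v \<omega> (multiplier_q u w) (multiplier_p w) x
        = variation_density u w v \<omega> q p x"
      using qe pe by eventually_elim (simp add: variation_density_def)
  qed
  also have "\<dots> = 0"
    using sys v \<omega> unfolding variation_density_integral(2)[OF q p u w v \<omega>] optimality_system_def
    by simp
  finally have "Jfun \<Omega> T f \<alpha>0 \<alpha>1 \<gamma>0 \<gamma>1 \<mu> \<alpha> u w
      \<le> Jfun \<Omega> T f \<alpha>0 \<alpha>1 \<gamma>0 \<gamma>1 \<mu> \<alpha> (\<lambda>x. u x + 1 * v x) (\<lambda>x. w x + 1 *\<^sub>R \<omega> x)"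
    using Jfun_add_scaled_ge[OF u w v \<omega>, of 1] by simp
  moreover have "(\<lambda>x. u x + 1 * v x) = u'" "(\<lambda>x. w x + 1 *\<^sub>R \<omega> x) = w'"
    unfolding v_def \<omega>_def by auto
  ultimately show "Jfun \<Omega> T f \<alpha>0 \<alpha>1 \<gamma>0 \<gamma>1 \<mu> \<alpha> u w \<le> Jfun \<Omega> T f \<alpha>0 \<alpha>1 \<gamma>0 \<gamma>1 \<mu> \<alpha> u' w'"
    by simp
qed

lemma minimizer_iff_optimality_system:
  assumes "H1 \<Omega> u" "H1v \<Omega> w"
  shows "minimizer u w \<longleftrightarrow> (\<exists>p q. optimality_system u w p q)"
  using minimizer_imp_optimality_system optimality_system_imp_minimizer assms by blast

end

text \<open>The Lipschitz boundary and the remaining hypotheses on \<open>T\<close> and \<open>B = T\<^sup>*T\<close> serve the existence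
of a minimiser and the predual problem; the equivalence does not use them.\<close>
theorem proposition4p3:
  fixes \<Omega> :: "(real^'n) set"
    and T :: "(real^'n \<Rightarrow> real) \<Rightarrow> (real^'n \<Rightarrow> real)"
    and f \<alpha>0 \<alpha>1 :: "real^'n \<Rightarrow> real"
    and \<alpha>low \<mu> \<alpha> \<gamma>0 \<gamma>1 :: real
    and u :: "real^'n \<Rightarrow> real" and w :: "real^'n \<Rightarrow> real^'n"
  defines "p0 \<equiv> real CARD('n) / (real CARD('n) - 1)"
  assumes dim: "CARD('n) \<ge> 2"
    and \<Omega>: "open \<Omega>" "bounded \<Omega>" "lipschitz_boundary \<Omega>"
    and alph: "continuous_on (closure \<Omega>) \<alpha>0" "continuous_on (closure \<Omega>) \<alpha>1" "\<alpha>low > 0"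
      "\<forall>x\<in>closure \<Omega>. \<alpha>0 x > \<alpha>low" "\<forall>x\<in>closure \<Omega>. \<alpha>1 x > \<alpha>low"
    and T_maps: "\<forall>v. Lp_fun \<Omega> p0 v \<longrightarrow> L2_fun \<Omega> (T v)"
    and T_ae: "\<forall>v v'. Lp_fun \<Omega> p0 v \<longrightarrow> Lp_fun \<Omega> p0 v' \<longrightarrow>
                 (AE x in lebesgue_on \<Omega>. v x = v' x) \<longrightarrow> (AE x in lebesgue_on \<Omega>. T v x = T v' x)"
    and T_lin: "\<forall>v v' c. Lp_fun \<Omega> p0 v \<longrightarrow> Lp_fun \<Omega> p0 v' \<longrightarrow>
                 (AE x in lebesgue_on \<Omega>. T (\<lambda>y. v y + c * v' y) x = T v x + c * T v' x)"
    and T_bdd: "\<exists>C. \<forall>v. Lp_fun \<Omega> p0 v \<longrightarrow> Lp_norm \<Omega> 2 (T v) \<le> C * Lp_norm \<Omega> p0 v"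
    and B_inj: "\<forall>v. Lp_fun \<Omega> p0 v \<longrightarrow>
                 (\<forall>v'. Lp_fun \<Omega> p0 v' \<longrightarrow> integral\<^sup>L (lebesgue_on \<Omega>) (\<lambda>x. T v x * T v' x) = 0)
                 \<longrightarrow> (AE x in lebesgue_on \<Omega>. v x = 0)"
    and B_surj: "\<forall>g. Lp_fun \<Omega> (real CARD('n)) g \<longrightarrow> (\<exists>v. Lp_fun \<Omega> p0 v \<and>
                 (\<forall>v'. Lp_fun \<Omega> p0 v' \<longrightarrow> integral\<^sup>L (lebesgue_on \<Omega>) (\<lambda>x. T v x * T v' x)
                        = integral\<^sup>L (lebesgue_on \<Omega>) (\<lambda>x. g x * v' x)))"
    and f: "L2_fun \<Omega> f"
    and par: "\<mu> > 0" "\<alpha> > 0" "\<gamma>0 > 0" "\<gamma>1 > 0"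
    and uw: "H1 \<Omega> u" "H1v \<Omega> w"
  shows "(\<forall>u' w'. H1 \<Omega> u' \<longrightarrow> H1v \<Omega> w' \<longrightarrow>
            Jfun \<Omega> T f \<alpha>0 \<alpha>1 \<gamma>0 \<gamma>1 \<mu> \<alpha> u w \<le> Jfun \<Omega> T f \<alpha>0 \<alpha>1 \<gamma>0 \<gamma>1 \<mu> \<alpha> u' w')
     \<longleftrightarrow>
     (\<exists>(p :: real^'n \<Rightarrow> real^'n^'n) (q :: real^'n \<Rightarrow> real^'n).
        L2_fun \<Omega> p \<and> (AE x in lebesgue_on \<Omega>. transpose (p x) = p x) \<and> L2_fun \<Omega> q \<and>
        (\<forall>v. H1 \<Omega> v \<longrightarrow>
           integral\<^sup>L (lebesgue_on \<Omega>) (\<lambda>x. T u x * T v x)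
           + \<mu> * integral\<^sup>L (lebesgue_on \<Omega>) (\<lambda>x. wgrad \<Omega> u x \<bullet> wgrad \<Omega> v x)
           + integral\<^sup>L (lebesgue_on \<Omega>) (\<lambda>x. q x \<bullet> wgrad \<Omega> v x)
           - integral\<^sup>L (lebesgue_on \<Omega>) (\<lambda>x. f x * T v x) = 0) \<and>
        (\<forall>\<omega>. H1v \<Omega> \<omega> \<longrightarrow>
           \<alpha> * integral\<^sup>L (lebesgue_on \<Omega>) (\<lambda>x. w x \<bullet> \<omega> x + wjac \<Omega> w x \<bullet> wjac \<Omega> \<omega> x)
           - integral\<^sup>L (lebesgue_on \<Omega>) (\<lambda>x. q x \<bullet> \<omega> x)
           + integral\<^sup>L (lebesgue_on \<Omega>) (\<lambda>x. p x \<bullet> symgrad \<Omega> \<omega> x) = 0) \<and>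
        (AE x in lebesgue_on \<Omega>. max (norm (wgrad \<Omega> u x - w x)) \<gamma>1 *\<^sub>R q x
                                 - \<alpha>1 x *\<^sub>R (wgrad \<Omega> u x - w x) = 0) \<and>
        (AE x in lebesgue_on \<Omega>. max (norm (symgrad \<Omega> w x)) \<gamma>0 *\<^sub>R p x
                                 - \<alpha>0 x *\<^sub>R symgrad \<Omega> w x = 0))"
proof -
  have "real CARD('n) \<ge> 2" using dim by simp
  then have p0: "0 \<le> p0" "p0 \<le> 2" unfolding p0_def by (simp_all add: field_simps)
  have weights_nonneg: "0 \<le> \<alpha>0 x" "0 \<le> \<alpha>1 x" if "x \<in> \<Omega>" for x
  proof -
    have "x \<in> closure \<Omega>" using that closure_subset by blast
    then have "\<alpha>low < \<alpha>0 x" "\<alpha>low < \<alpha>1 x" using alph(4,5) by auto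
    then show "0 \<le> \<alpha>0 x" "0 \<le> \<alpha>1 x" using alph(3) by linarith+
  qed
  interpret huber_tgv_problem \<Omega> T f \<alpha>0 \<alpha>1 \<mu> \<alpha> \<gamma>0 \<gamma>1 p0
    by (rule huber_tgv_problem.intro) (use \<Omega> p0 alph(1,2) weights_nonneg T_maps T_lin f par in auto)
  show ?thesis
    using minimizer_iff_optimality_system[OF uw]
    unfolding minimizer_def optimality_system_def residual_u_def residual_w_def .
qed

end
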